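(* Assume $C$ satisfies (A1), (A2) and (A3). Then there exist $\Theta_1\ge1$ and $c>0$, depending only on $\kappa_1,\kappa_2,N_0,d,\alpha$, such that for all $\rho\ge1$, all $s>2r>\Theta_1\rho^{-1}$ and all $(t,x)\in[0,\infty)\times\rho^{-1}\mathbb Z^d$, $$\mathbb P^{(t,x)}\big(W^\rho_{\tau(Q^\rho(t,x,r);W^\rho)}\notin Q^\rho(t,x,s)\big)\le c\,\frac{r^\alpha}{s^\alpha}.$$
   Context: Fix $d\ge1$, $\alpha\in(0,2)$. $C:\mathbb Z^d\times\mathbb Z^d\to[0,\infty)$ with: (A1) $C(x,y)=C(y,x)$, $C(x,x)=0$. (A2) $C(x,y)\le\kappa_1|x-y|^{-d-\alpha}$ for $x\ne y$. (A3) There are $N_0\in\mathbb N,\kappa_2>0$ such that for $x\ne y$ in $\mathbb Z^d$ there are $z_0^{(x,y)}=x,\dots,z_l^{(x,y)}=y$, $l\le N_0$, with $C(z_i^{(x,y)},z_{i+1}^{(x,y)})\ge\kappa_2|x-y|^{-d-\alpha}$; and for every $(\zeta,\xi)$ at most $N_0$ pairs $(x,y)$ have $\zeta=z_k^{(x,y)},\xi=z_{k+1}^{(x,y)}$ for some $k$. $B^\rho(x,r)=\{y\in\rho^{-1}\mathbb Z^d:|x-y|<r\}$. $Y$ is the continuous-time Markov chain on $\mathbb Z^d$ jumping from $x$ to $y$ at rate $C(x,y)$; $Y^\rho_t=\rho^{-1}Y_{\rho^\alpha t}$. $W^\rho_t=(U_0+t,Y^\rho_t)$ is the space-time process. $\tilde\gamma>0$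 is a fixed constant with $\mathbb P^x(\tau(B^1(x,r);Y)<\tilde\gamma r^\alpha)\le\frac12$ for all $x\in\mathbb Z^d$, $r\ge1$; $Q^\rho(t,x,r)=[t,t+\tilde\gamma r^\alpha]\times B^\rho(x,r)$. $\tau(\Omega;Z)$ is the first exit time of $Z$ from $\Omega$. *)

theory Defs
  imports "HOL-Probability.Probability"
begin

text \<open>Points of Z^d are vectors int^'d; d = CARD('d). They are embedded into R^d by lat.\<close>

definition lat :: "int^'d \<Rightarrow> real^'d" where
  "lat z = (\<chi> i. real_of_int (z $ i))"

definition condA1 :: "(int^'d \<Rightarrow> int^'d \<Rightarrow> real) \<Rightarrow> bool" where
  "condA1 C \<longleftrightarrow> (\<forall>x y. 0 \<le> C x y \<and> C x y = C y x \<and> C x x = 0)"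

definition condA2 :: "real \<Rightarrow> real \<Rightarrow> (int^'d \<Rightarrow> int^'d \<Rightarrow> real) \<Rightarrow> bool" where
  "condA2 \<alpha> \<kappa>1 C \<longleftrightarrow>
     (\<forall>x y. x \<noteq> y \<longrightarrow> C x y \<le> \<kappa>1 * norm (lat x - lat y) powr (- (real CARD('d) + \<alpha>)))"

definition condA3 :: "real \<Rightarrow> nat \<Rightarrow> real \<Rightarrow> (int^'d \<Rightarrow> int^'d \<Rightarrow> real) \<Rightarrow> bool" where
  "condA3 \<alpha> N0 \<kappa>2 C \<longleftrightarrow>
     (\<exists>(path :: int^'d \<Rightarrow> int^'d \<Rightarrow> nat \<Rightarrow> int^'d) (len :: int^'d \<Rightarrow> int^'d \<Rightarrow> nat).
        (\<forall>x y. x \<noteq> y \<longrightarrow>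
            len x y \<le> N0 \<and> path x y 0 = x \<and> path x y (len x y) = y \<and>
            (\<forall>k < len x y. C (path x y k) (path x y (Suc k))
                 \<ge> \<kappa>2 * norm (lat x - lat y) powr (- (real CARD('d) + \<alpha>)))) \<and>
        (\<forall>\<zeta> \<xi>. finite {(x, y). x \<noteq> y \<and> (\<exists>k < len x y. path x y k = \<zeta> \<and> path x y (Suc k) = \<xi>)} \<and>
                card {(x, y). x \<noteq> y \<and> (\<exists>k < len x y. path x y k = \<zeta> \<and> path x y (Suc k) = \<xi>)} \<le> N0))"

definition rate :: "(int^'d \<Rightarrow> int^'d \<Rightarrow> real) \<Rightarrow> int^'d \<Rightarrow> real" where
  "rate C x = (\<Sum>\<^sub>\<infinity> y. C x y)"

definition jump_prob :: "(int^'d \<Rightarrow> int^'d \<Rightarrow> real) \<Rightarrow> int^'d \<Rightarrow> int^'d \<Rightarrow> real" where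
  "jump_prob C x y = C x y / rate C x"

text \<open>Jump chain / holding time characterisation (Norris) of the continuous-time Markov chain
  with jump rates C started at x0: J n is the state after the n-th jump, S n the holding time
  in J n.\<close>
definition is_ctmc :: "'w measure \<Rightarrow> (int^'d \<Rightarrow> int^'d \<Rightarrow> real) \<Rightarrow> int^'d
    \<Rightarrow> (nat \<Rightarrow> 'w \<Rightarrow> int^'d) \<Rightarrow> (nat \<Rightarrow> 'w \<Rightarrow> real) \<Rightarrow> bool" where
  "is_ctmc M C x0 J S \<longleftrightarrow> prob_space M \<and>
     (\<forall>n. J n \<in> M \<rightarrow>\<^sub>M count_space UNIV) \<and> (\<forall>n. S n \<in> borel_measurable M) \<and>
     (\<forall>n (xs :: nat \<Rightarrow> int^'d) (ts :: nat \<Rightarrow> real). (\<forall>i. 0 \<le> ts i) \<longrightarrow>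
        measure M {\<omega> \<in> space M. (\<forall>i\<le>n. J i \<omega> = xs i) \<and> (\<forall>i<n. ts i < S i \<omega>)}
        = (if xs 0 = x0 then 1 else 0) *
          (\<Prod>i<n. jump_prob C (xs i) (xs (Suc i)) * exp (- rate C (xs i) * ts i)))"

definition jtime :: "(nat \<Rightarrow> 'w \<Rightarrow> real) \<Rightarrow> nat \<Rightarrow> 'w \<Rightarrow> real" where
  "jtime S n \<omega> = (\<Sum>i<n. S i \<omega>)"

definition ctmc_pos :: "(nat \<Rightarrow> 'w \<Rightarrow> int^'d) \<Rightarrow> (nat \<Rightarrow> 'w \<Rightarrow> real) \<Rightarrow> real \<Rightarrow> 'w \<Rightarrow> int^'d" where
  "ctmc_pos J S t \<omega> = J (card {n. 0 < n \<and> jtime S n \<omega> \<le> t}) \<omega>"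

definition pos_rho :: "real \<Rightarrow> real \<Rightarrow> (nat \<Rightarrow> 'w \<Rightarrow> int^'d) \<Rightarrow> (nat \<Rightarrow> 'w \<Rightarrow> real)
    \<Rightarrow> real \<Rightarrow> 'w \<Rightarrow> real^'d" where
  "pos_rho \<rho> \<alpha> J S t \<omega> = (1 / \<rho>) *\<^sub>R lat (ctmc_pos J S (\<rho> powr \<alpha> * t) \<omega>)"

definition lball :: "real \<Rightarrow> real^'d \<Rightarrow> real \<Rightarrow> (real^'d) set" where
  "lball \<rho> x r = {y. (\<exists>z::int^'d. y = (1 / \<rho>) *\<^sub>R lat z) \<and> dist x y < r}"

definition Qbox :: "real \<Rightarrow> real \<Rightarrow> real \<Rightarrow> real \<Rightarrow> real^'d \<Rightarrow> real \<Rightarrow> (real \<times> (real^'d)) set" where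
  "Qbox \<gamma> \<alpha> \<rho> t x r = {t .. t + \<gamma> * r powr \<alpha>} \<times> lball \<rho> x r"

definition first_exit :: "'a set \<Rightarrow> (real \<Rightarrow> 'a) \<Rightarrow> real" where
  "first_exit A Z = Inf {u. 0 \<le> u \<and> Z u \<notin> A}"

end

theory Submission
  imports Defs
begin

text \<open>By (A2) and a dyadic summation over the lattice, the total jump rate out of any site is at most
  \<open>Q = \<kappa>1 K(d,\<alpha>)\<close> and the rate of jumps of length at least \<open>R\<close> is \<open>O(R\<^sup>-\<^sup>\<alpha>)\<close>; by (A3) the total
  rate is at least \<open>\<kappa>2\<close>, so a jump is that long with probability \<open>O(R\<^sup>-\<^sup>\<alpha>)\<close>.
  If the space-time process leaves the small cylinder at a point outside the large one, the spatial
  exit is a single jump of length at least \<open>\<rho>(s - r)\<close>, made before unscaled time \<open>T = \<rho>\<^sup>\<alpha> \<gamma> r\<^sup>\<alpha>\<close>.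
  Before time \<open>T\<close> at most \<open>Q T\<close> holding times exceed \<open>1/Q\<close>, while each holding time exceeds
  \<open>1/Q\<close> with probability at least \<open>e\<^sup>-\<^sup>1\<close> whatever the past; so the expected number of jumps
  made while at most \<open>Q T\<close> long holding times have elapsed is at most \<open>e (Q T + 1)\<close>.  Summing the
  probability of a long jump over these jumps gives \<open>O((\<rho> s)\<^sup>-\<^sup>\<alpha> (Q T + 1)) = O(r\<^sup>\<alpha> / s\<^sup>\<alpha>)\<close>,
  using \<open>Q T \<ge> 1\<close>, which is what the choice of \<open>\<Theta>1\<close> guarantees.\<close>

section \<open>Lattice sums\<close>

lemma lat_nth [simp]: "lat v $ i = real_of_int (v $ i)"
  by (simp add: lat_def)

lemma lat_diff: "lat x - lat y = lat (x - y)"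
  by (simp add: lat_def vec_eq_iff)

lemma lat_zero [simp]: "lat 0 = 0"
  by (simp add: lat_def vec_eq_iff)

lemma lat_axis [simp]: "lat (axis i 1) = axis i 1"
  by (simp add: lat_def vec_eq_iff axis_def)

lemma abs_le_norm_lat: "\<bar>real_of_int (v $ i)\<bar> \<le> norm (lat v)"
  using component_le_norm_cart[of "lat v" i] by simp

lemma one_le_norm_lat:
  assumes "v \<noteq> 0"
  shows "1 \<le> norm (lat v)"
proof -
  obtain i where "v $ i \<noteq> 0"
    using assms by (metis vec_eq_iff zero_index)
  then show ?thesis
    using abs_le_norm_lat[of v i] by linarith
qed

lemma card_int_cube_le:
  fixes N :: int
  assumes "0 \<le> N"
  shows "finite {v::int^'n. \<forall>i. \<bar>v $ i\<bar> \<le> N}"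
    and "card {v::int^'n. \<forall>i. \<bar>v $ i\<bar> \<le> N} \<le> nat (2 * N + 1) ^ CARD('n)"
proof -
  let ?P = "Pi\<^sub>E (UNIV::'n set) (\<lambda>_. {-N..N})"
  have sub: "{v::int^'n. \<forall>i. \<bar>v $ i\<bar> \<le> N} \<subseteq> vec_lambda ` ?P"
  proof
    fix v :: "int^'n"
    assume "v \<in> {v. \<forall>i. \<bar>v $ i\<bar> \<le> N}"
    then have "(\<lambda>i. v $ i) \<in> ?P"
      by (auto simp: PiE_iff abs_le_iff minus_le_iff)
    then show "v \<in> vec_lambda ` ?P"
      by (metis image_eqI vector_component_simps(5) vec_lambda_eta)
  qed
  have fin: "finite ?P"
    by (intro finite_PiE) auto
  have "card ?P = nat (2 * N + 1) ^ CARD('n)"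
    using assms by (subst card_PiE) (auto simp: prod_constant)
  then show "finite {v::int^'n. \<forall>i. \<bar>v $ i\<bar> \<le> N}"
    and "card {v::int^'n. \<forall>i. \<bar>v $ i\<bar> \<le> N} \<le> nat (2 * N + 1) ^ CARD('n)"
    using finite_subset[OF sub finite_imageI[OF fin]] card_mono[OF finite_imageI[OF fin] sub]
      card_image_le[OF fin, of vec_lambda] by auto
qed

lemma card_lattice_ball_le:
  fixes Y :: real
  assumes "0 \<le> Y"
  shows "finite {v::int^'n. norm (lat v) < Y}"
    and "card {v::int^'n. norm (lat v) < Y} \<le> (2 * Y + 1) ^ CARD('n)"
proof -
  define N where "N = \<lfloor>Y\<rfloor>"
  have "0 \<le> N"
    unfolding N_def using assms by simp
  have ball_cube: "{v::int^'n. norm (lat v) < Y} \<subseteq> {v. \<forall>i. \<bar>v $ i\<bar> \<le> N}"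
  proof
    fix v :: "int^'n"
    assume "v \<in> {v. norm (lat v) < Y}"
    then have "\<bar>real_of_int (v $ i)\<bar> \<le> Y" for i
      using abs_le_norm_lat[of v i] by simp
    then show "v \<in> {v. \<forall>i. \<bar>v $ i\<bar> \<le> N}"
      unfolding N_def by (simp add: le_floor_iff)
  qed
  then show "finite {v::int^'n. norm (lat v) < Y}"
    using card_int_cube_le(1)[OF \<open>0 \<le> N\<close>] by (rule finite_subset)
  then have "card {v::int^'n. norm (lat v) < Y} \<le> nat (2 * N + 1) ^ CARD('n)"
    using card_mono[OF card_int_cube_le(1)[OF \<open>0 \<le> N\<close>] ball_cube] card_int_cube_le(2)[OF \<open>0 \<le> N\<close>, where 'n='n]
    by linarith
  then have "real (card {v::int^'n. norm (lat v) < Y}) \<le> real (nat (2 * N + 1) ^ CARD('n))"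
    by (simp only: of_nat_le_iff)
  also have "\<dots> = (2 * real_of_int N + 1) ^ CARD('n)"
    using \<open>0 \<le> N\<close> by simp
  also have "\<dots> \<le> (2 * Y + 1) ^ CARD('n)"
    using \<open>0 \<le> N\<close> unfolding N_def by (intro power_mono) auto
  finally show "card {v::int^'n. norm (lat v) < Y} \<le> (2 * Y + 1) ^ CARD('n)" .
qed

lemma lattice_dyadic_shell:
  fixes v :: "int^'n"
  assumes "v \<noteq> 0" "R \<le> norm (lat v)"
  obtains j :: nat where "2 ^ j * max R 1 \<le> norm (lat v)" "norm (lat v) < 2 * (2 ^ j * max R 1)"
proof -
  define y where "y = norm (lat v) / max R 1"
  define k where "k = \<lfloor>log 2 y\<rfloor>"
  have "1 \<le> y"
    unfolding y_def using one_le_norm_lat[OF assms(1)] assms(2) by simp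
  then have "0 \<le> k" "2 powr k \<le> y" "y < 2 powr (k + 1)"
    using floor_log_eq_powr_iff[of y 2 k] unfolding k_def by auto
  then have "2 ^ nat k \<le> y" "y < 2 * 2 ^ nat k"
    by (simp_all add: powr_realpow[symmetric] powr_add)
  then show ?thesis
    using that[of "nat k"] unfolding y_def by (simp add: field_simps)
qed

text \<open>\<open>5\<^sup>d\<close> bounds the number of lattice points in a dyadic shell \<open>X \<le> |v| < 2X\<close> relative to
  \<open>X\<^sup>d\<close>, and \<open>1/(1 - 2\<^sup>-\<^sup>\<alpha>)\<close> sums the geometric series over the shells covering a tail.\<close>

definition lattice_tail_const :: "nat \<Rightarrow> real \<Rightarrow> real" where
  "lattice_tail_const d \<alpha> = 5 ^ d / (1 - 2 powr (-\<alpha>))"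

lemma lattice_tail_const_pos: "0 < \<alpha> \<Longrightarrow> 0 < lattice_tail_const d \<alpha>"
  unfolding lattice_tail_const_def using powr_less_one[of 2 "-\<alpha>"] by auto

lemma lattice_shell_sum_le:
  fixes \<alpha> X :: real
  assumes \<alpha>: "0 < \<alpha>" and X: "1 \<le> X"
  shows "(\<integral>\<^sup>+ v. ennreal (norm (lat v) powr (-(real CARD('n) + \<alpha>)))
            * indicator {v::int^'n. X \<le> norm (lat v) \<and> norm (lat v) < 2 * X} v \<partial>count_space UNIV)
         \<le> ennreal (5 ^ CARD('n) * X powr (-\<alpha>))"
proof -
  define d where "d = CARD('n)"
  define shell where "shell = {v::int^'n. X \<le> norm (lat v) \<and> norm (lat v) < 2 * X}"
  define b where "b = X powr (-(real d + \<alpha>))"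
  have "0 \<le> b"
    unfolding b_def by simp
  have "shell \<subseteq> {v. norm (lat v) < 2 * X}"
    unfolding shell_def by auto
  moreover note ball = card_lattice_ball_le[of "2 * X", where 'n='n]
  ultimately have "finite shell" and "card shell \<le> card {v::int^'n. norm (lat v) < 2 * X}"
    using X by (auto intro: finite_subset card_mono)
  then have card_shell: "card shell \<le> (5 * X) ^ d"
    using ball(2) X unfolding d_def by (smt (verit) of_nat_le_iff power_mono)
  have "(\<integral>\<^sup>+ v. ennreal (norm (lat v) powr (-(real d + \<alpha>))) * indicator shell v \<partial>count_space UNIV)
      \<le> (\<integral>\<^sup>+ v. ennreal b * indicator shell v \<partial>count_space UNIV)"
    unfolding b_def shell_def using X \<alpha>
    by (intro nn_integral_mono) (auto intro!: ennreal_leI powr_mono2' split: split_indicator)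
  also have "\<dots> = ennreal (b * card shell)"
    using \<open>finite shell\<close> \<open>0 \<le> b\<close>
    by (simp add: nn_integral_cmult_indicator ennreal_mult ennreal_of_nat_eq_real_of_nat)
  also have "\<dots> \<le> ennreal (b * (5 * X) ^ d)"
    using card_shell \<open>0 \<le> b\<close> by (intro ennreal_leI mult_left_mono)
  also have "b * (5 * X) ^ d = 5 ^ d * X powr (-\<alpha>)"
    unfolding b_def using X by (simp add: power_mult_distrib powr_realpow[symmetric] powr_add[symmetric])
  finally show ?thesis
    unfolding shell_def d_def .
qed

lemma lattice_tail_sum:
  fixes \<alpha> R :: real
  assumes \<alpha>: "0 < \<alpha>" and R: "0 < R"
  shows "(\<integral>\<^sup>+ v. ennreal (norm (lat v) powr (-(real CARD('n) + \<alpha>)))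
            \<partial>count_space {v::int^'n. v \<noteq> 0 \<and> R \<le> norm (lat v)})
         \<le> ennreal (lattice_tail_const CARD('n) \<alpha> * R powr (-\<alpha>))"
proof -
  define R' where "R' = max R 1"
  define q :: real where "q = 2 powr (-\<alpha>)"
  have q: "0 < q" "q < 1"
    unfolding q_def using \<alpha> by (auto intro: powr_less_one)
  define X where "X j = 2 ^ j * R'" for j :: nat
  have X1: "1 \<le> X j" for j
    unfolding X_def R'_def using mult_mono[of 1 "2 ^ j" 1 "max R 1 :: real"] by simp
  define shell where "shell j = {v::int^'n. X j \<le> norm (lat v) \<and> norm (lat v) < 2 * X j}" for j
  define f where "f v = ennreal (norm (lat v) powr (-(real CARD('n) + \<alpha>)))" for v :: "int^'n"
  define tail where "tail = {v::int^'n. v \<noteq> 0 \<and> R \<le> norm (lat v)}"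
  have tail_shells: "f v * indicator tail v \<le> (\<Sum>j. f v * indicator (shell j) v)" for v
  proof (cases "v \<in> tail")
    case True
    then obtain j where "v \<in> shell j"
      using lattice_dyadic_shell[of v R] unfolding tail_def shell_def X_def R'_def by auto
    then have "f v * indicator tail v = (\<Sum>i\<in>{j}. f v * indicator (shell i) v)"
      using True by simp
    also have "\<dots> \<le> (\<Sum>j. f v * indicator (shell j) v)"
      by (rule sum_le_suminf) auto
    finally show ?thesis .
  qed simp
  have shell_sum: "(\<integral>\<^sup>+ v. f v * indicator (shell j) v \<partial>count_space UNIV)
      \<le> ennreal (5 ^ CARD('n) * R' powr (-\<alpha>) * q ^ j)" for j
  proof -
    have "X j powr (-\<alpha>) = q ^ j * R' powr (-\<alpha>)"
      unfolding X_def R'_def q_def by (simp add: powr_mult powr_realpow[symmetric] powr_powr mult.commute)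
    then show ?thesis
      using lattice_shell_sum_le[OF \<alpha> X1[of j], where 'n='n] unfolding f_def shell_def
      by (simp add: algebra_simps)
  qed
  have "(\<integral>\<^sup>+ v. f v \<partial>count_space tail) = (\<integral>\<^sup>+ v. f v * indicator tail v \<partial>count_space UNIV)"
    by (rule nn_integral_count_space_indicator) simp
  also have "\<dots> \<le> (\<integral>\<^sup>+ v. (\<Sum>j. f v * indicator (shell j) v) \<partial>count_space UNIV)"
    by (intro nn_integral_mono tail_shells)
  also have "\<dots> = (\<Sum>j. \<integral>\<^sup>+ v. f v * indicator (shell j) v \<partial>count_space UNIV)"
    by (rule nn_integral_suminf) auto
  also have "\<dots> \<le> (\<Sum>j. ennreal (5 ^ CARD('n) * R' powr (-\<alpha>) * q ^ j))"
    by (intro suminf_le summableI shell_sum)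
  also have "\<dots> = ennreal (5 ^ CARD('n) * R' powr (-\<alpha>) / (1 - q))"
    using sums_mult[OF geometric_sums[of q], of "5 ^ CARD('n) * R' powr (-\<alpha>)"] q
    by (intro suminf_ennreal_eq) (auto simp: field_simps)
  also have "\<dots> \<le> ennreal (lattice_tail_const CARD('n) \<alpha> * R powr (-\<alpha>))"
  proof (rule ennreal_leI)
    have "R' powr (-\<alpha>) \<le> R powr (-\<alpha>)"
      unfolding R'_def using R \<alpha> by (intro powr_mono2') auto
    then show "5 ^ CARD('n) * R' powr (-\<alpha>) / (1 - q) \<le> lattice_tail_const CARD('n) \<alpha> * R powr (-\<alpha>)"
      unfolding lattice_tail_const_def using q by (simp add: divide_right_mono q_def[symmetric])
  qed
  finally show ?thesis
    unfolding f_def tail_def .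
qed

section \<open>Jump rates\<close>

lemma nn_integral_far_rates_le:
  fixes C :: "int^'d \<Rightarrow> int^'d \<Rightarrow> real"
  assumes A2: "condA2 \<alpha> \<kappa>1 C" and \<alpha>: "0 < \<alpha>" and \<kappa>1: "0 \<le> \<kappa>1" and R: "0 < R"
  shows "(\<integral>\<^sup>+ y. ennreal (C x y) \<partial>count_space {y. R \<le> norm (lat y - lat x)})
           \<le> ennreal (\<kappa>1 * lattice_tail_const CARD('d) \<alpha> * R powr (-\<alpha>))"
proof -
  let ?far = "{y. R \<le> norm (lat y - lat x)}"
  let ?tail = "{v::int^'d. v \<noteq> 0 \<and> R \<le> norm (lat v)}"
  let ?g = "\<lambda>v::int^'d. ennreal (\<kappa>1 * norm (lat v) powr (-(real CARD('d) + \<alpha>)))"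
  have bij: "bij_betw (\<lambda>v. x + v) ?tail ?far"
  proof (rule bij_betwI[where g = "\<lambda>y. y - x"])
    show "(\<lambda>y. y - x) \<in> ?far \<rightarrow> ?tail"
      using R by (auto simp: lat_diff)
  qed (auto simp: lat_diff)
  have "(\<integral>\<^sup>+ y. ennreal (C x y) \<partial>count_space ?far) \<le> (\<integral>\<^sup>+ y. ?g (y - x) \<partial>count_space ?far)"
  proof (rule nn_integral_mono)
    fix y
    assume "y \<in> space (count_space ?far)"
    then have "x \<noteq> y"
      using R by auto
    then have "C x y \<le> \<kappa>1 * norm (lat x - lat y) powr (- (real CARD('d) + \<alpha>))"
      using A2 unfolding condA2_def by blast
    then show "ennreal (C x y) \<le> ?g (y - x)"
      by (simp add: ennreal_leI lat_diff[symmetric] norm_minus_commute)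
  qed
  also have "\<dots> = (\<integral>\<^sup>+ v. ?g v \<partial>count_space ?tail)"
    using nn_integral_bij_count_space[OF bij, of "\<lambda>y. ?g (y - x)"] by simp
  also have "\<dots> = ennreal \<kappa>1 * (\<integral>\<^sup>+ v. ennreal (norm (lat v) powr (-(real CARD('d) + \<alpha>))) \<partial>count_space ?tail)"
    using \<kappa>1 by (subst nn_integral_cmult[symmetric]) (auto simp: ennreal_mult)
  also have "\<dots> \<le> ennreal \<kappa>1 * ennreal (lattice_tail_const CARD('d) \<alpha> * R powr (-\<alpha>))"
    using lattice_tail_sum[OF \<alpha> R, where 'n='d] by (intro mult_left_mono) auto
  finally show ?thesis
    using \<kappa>1 by (simp add: ennreal_mult' mult.assoc)
qed

lemma rate_nonneg: "condA1 C \<Longrightarrow> 0 \<le> rate C x"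
  unfolding rate_def condA1_def by (simp add: infsum_nonneg)

lemma nn_integral_rates:
  fixes C :: "int^'d \<Rightarrow> int^'d \<Rightarrow> real"
  assumes A1: "condA1 C" and A2: "condA2 \<alpha> \<kappa>1 C" and \<alpha>: "0 < \<alpha>" and \<kappa>1: "0 \<le> \<kappa>1"
  shows "(\<integral>\<^sup>+ y. ennreal (C x y) \<partial>count_space UNIV) \<le> ennreal (\<kappa>1 * lattice_tail_const CARD('d) \<alpha>)"
    and "ennreal (rate C x) = (\<integral>\<^sup>+ y. ennreal (C x y) \<partial>count_space UNIV)"
proof -
  have C_nonneg: "0 \<le> C x y" for y
    using A1 unfolding condA1_def by blast
  have "C x y = 0" if "\<not> 1 \<le> norm (lat y - lat x)" for y
    using that A1 one_le_norm_lat[of "y - x"] unfolding condA1_def by (auto simp: lat_diff)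
  then have "(\<integral>\<^sup>+ y. ennreal (C x y) \<partial>count_space UNIV)
      = (\<integral>\<^sup>+ y. ennreal (C x y) * indicator {y. 1 \<le> norm (lat y - lat x)} y \<partial>count_space UNIV)"
    by (intro nn_integral_cong) (simp split: split_indicator)
  also have "\<dots> = (\<integral>\<^sup>+ y. ennreal (C x y) \<partial>count_space {y. 1 \<le> norm (lat y - lat x)})"
    by (rule nn_integral_count_space_indicator[symmetric]) simp
  also have "\<dots> \<le> ennreal (\<kappa>1 * lattice_tail_const CARD('d) \<alpha>)"
    using nn_integral_far_rates_le[OF A2 \<alpha> \<kappa>1, of 1 x] by simp
  finally show le: "(\<integral>\<^sup>+ y. ennreal (C x y) \<partial>count_space UNIV) \<le> ennreal (\<kappa>1 * lattice_tail_const CARD('d) \<alpha>)" .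
  then have fin: "(\<integral>\<^sup>+ y. ennreal (C x y) \<partial>count_space UNIV) < \<top>"
    using ennreal_less_top le_less_trans by blast
  have "Infinite_Set_Sum.abs_summable_on (C x) UNIV"
    unfolding abs_summable_on_def using fin C_nonneg by (subst integrable_iff_bounded) auto
  then have "rate C x = infsetsum (C x) UNIV"
    unfolding rate_def by (rule infsetsum_infsum[symmetric])
  also have "\<dots> = enn2real (\<integral>\<^sup>+ y. ennreal (C x y) \<partial>count_space UNIV)"
    using fin C_nonneg by (intro infsetsum_conv_nn_integral) auto
  finally show "ennreal (rate C x) = (\<integral>\<^sup>+ y. ennreal (C x y) \<partial>count_space UNIV)"
    using fin by (simp add: less_top)
qed

lemma rate_le:
  fixes C :: "int^'d \<Rightarrow> int^'d \<Rightarrow> real"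
  assumes "condA1 C" "condA2 \<alpha> \<kappa>1 C" "0 < \<alpha>" "0 \<le> \<kappa>1"
  shows "rate C x \<le> \<kappa>1 * lattice_tail_const CARD('d) \<alpha>"
proof -
  have "ennreal (rate C x) \<le> ennreal (\<kappa>1 * lattice_tail_const CARD('d) \<alpha>)"
    using nn_integral_rates[OF assms, of x] by simp
  then show ?thesis
    using lattice_tail_const_pos[OF \<open>0 < \<alpha>\<close>, of "CARD('d)"] \<open>0 \<le> \<kappa>1\<close>
    by (simp add: ennreal_le_iff)
qed

text \<open>By (A3), the path from \<open>x\<close> to its lattice neighbour \<open>x - e\<^sub>i\<close> starts with a jump of rate at
  least \<open>\<kappa>2\<close>.\<close>

lemma rate_ge:
  fixes C :: "int^'d \<Rightarrow> int^'d \<Rightarrow> real"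
  assumes A1: "condA1 C" and A2: "condA2 \<alpha> \<kappa>1 C" and A3: "condA3 \<alpha> N0 \<kappa>2 C"
    and \<alpha>: "0 < \<alpha>" and \<kappa>1: "0 \<le> \<kappa>1"
  shows "\<kappa>2 \<le> rate C x"
proof -
  obtain path :: "int^'d \<Rightarrow> int^'d \<Rightarrow> nat \<Rightarrow> int^'d" and len where
    path: "\<And>x y. x \<noteq> y \<Longrightarrow> len x y \<le> N0 \<and> path x y 0 = x \<and> path x y (len x y) = y \<and>
            (\<forall>k < len x y. C (path x y k) (path x y (Suc k))
                 \<ge> \<kappa>2 * norm (lat x - lat y) powr (- (real CARD('d) + \<alpha>)))"
    using A3 unfolding condA3_def by blast
  define y where "y = x - axis undefined 1"
  have "x \<noteq> y"
    unfolding y_def by (simp add: axis_eq_0_iff)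
  then have "len x y \<noteq> 0"
    using path[OF \<open>x \<noteq> y\<close>] by metis
  moreover have "norm (lat x - lat y) = 1"
    unfolding y_def lat_diff by simp
  ultimately have "\<kappa>2 \<le> C x (path x y 1)"
    using path[OF \<open>x \<noteq> y\<close>] by fastforce
  also have "C x (path x y 1) \<le> rate C x"
  proof -
    have "ennreal (C x (path x y 1)) = (\<integral>\<^sup>+ w. ennreal (C x w) * indicator {path x y 1} w \<partial>count_space UNIV)"
      by (subst nn_integral_indicator_singleton) auto
    also have "\<dots> \<le> (\<integral>\<^sup>+ w. ennreal (C x w) \<partial>count_space UNIV)"
      by (intro nn_integral_mono) (auto split: split_indicator)
    also have "\<dots> = ennreal (rate C x)"
      using nn_integral_rates(2)[OF A1 A2 \<alpha> \<kappa>1] by simp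
    finally show ?thesis
      using rate_nonneg[OF A1] by (simp add: ennreal_le_iff)
  qed
  finally show ?thesis .
qed

lemma jump_prob_nonneg: "condA1 C \<Longrightarrow> 0 \<le> jump_prob C x y"
  unfolding jump_prob_def using rate_nonneg[of C x] by (simp add: condA1_def)

lemma nn_integral_jump_prob:
  fixes C :: "int^'d \<Rightarrow> int^'d \<Rightarrow> real"
  assumes "condA1 C" "condA2 \<alpha> \<kappa>1 C" "condA3 \<alpha> N0 \<kappa>2 C" "0 < \<alpha>" "0 \<le> \<kappa>1" "0 < \<kappa>2"
  shows "(\<integral>\<^sup>+ y. ennreal (jump_prob C x y) \<partial>count_space A)
    = (\<integral>\<^sup>+ y. ennreal (C x y) \<partial>count_space A) / ennreal (rate C x)"
proof -
  have "0 < rate C x"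
    using rate_ge[OF assms(1-5), of x] \<open>0 < \<kappa>2\<close> by linarith
  then have "ennreal (jump_prob C x y) = ennreal (C x y) / ennreal (rate C x)" for y
    using \<open>condA1 C\<close> unfolding jump_prob_def condA1_def by (simp add: divide_ennreal)
  then show ?thesis
    by (simp add: nn_integral_divide)
qed

lemma jump_prob_sum_one:
  fixes C :: "int^'d \<Rightarrow> int^'d \<Rightarrow> real"
  assumes "condA1 C" "condA2 \<alpha> \<kappa>1 C" "condA3 \<alpha> N0 \<kappa>2 C" "0 < \<alpha>" "0 \<le> \<kappa>1" "0 < \<kappa>2"
  shows "(\<integral>\<^sup>+ y. ennreal (jump_prob C x y) \<partial>count_space UNIV) = 1"
  using rate_ge[OF assms(1-5), of x] \<open>0 < \<kappa>2\<close>
  by (simp add: nn_integral_jump_prob[OF assms] nn_integral_rates(2)[OF assms(1,2,4,5), symmetric]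
      divide_ennreal[symmetric])

lemma nn_integral_far_jump_prob_le:
  fixes C :: "int^'d \<Rightarrow> int^'d \<Rightarrow> real"
  assumes "condA1 C" "condA2 \<alpha> \<kappa>1 C" "condA3 \<alpha> N0 \<kappa>2 C" "0 < \<alpha>" "0 \<le> \<kappa>1" "0 < \<kappa>2"
    and "0 < R"
  shows "(\<integral>\<^sup>+ y. ennreal (jump_prob C x y) \<partial>count_space {y. R \<le> norm (lat y - lat x)})
           \<le> ennreal (\<kappa>1 * lattice_tail_const CARD('d) \<alpha> * R powr (-\<alpha>) / \<kappa>2)"
proof -
  define B where "B = \<kappa>1 * lattice_tail_const CARD('d) \<alpha> * R powr (-\<alpha>)"
  have "0 \<le> B"
    unfolding B_def using lattice_tail_const_pos[OF \<open>0 < \<alpha>\<close>, of "CARD('d)"] \<open>0 \<le> \<kappa>1\<close> by simp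
  have rate: "\<kappa>2 \<le> rate C x"
    by (rule rate_ge[OF assms(1-5)])
  have "(\<integral>\<^sup>+ y. ennreal (C x y) \<partial>count_space {y. R \<le> norm (lat y - lat x)}) / ennreal (rate C x)
      \<le> ennreal B / ennreal (rate C x)"
    unfolding B_def by (intro divide_right_mono_ennreal nn_integral_far_rates_le assms)
  also have "\<dots> = ennreal (B / rate C x)"
    using \<open>0 \<le> B\<close> rate \<open>0 < \<kappa>2\<close> by (simp add: divide_ennreal)
  also have "\<dots> \<le> ennreal (B / \<kappa>2)"
    using \<open>0 \<le> B\<close> rate \<open>0 < \<kappa>2\<close> by (intro ennreal_leI divide_left_mono) auto
  finally show ?thesis
    unfolding B_def nn_integral_jump_prob[OF assms(1-6)] .
qed

section \<open>Paths of the chain\<close>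

lemma first_exit_le:
  fixes Z :: "real \<Rightarrow> 'a"
  assumes T: "0 \<le> T" and outside: "\<And>u. T < u \<Longrightarrow> Z u \<notin> A"
  shows "0 \<le> first_exit A Z" and "first_exit A Z \<le> T"
    and "\<And>u. 0 \<le> u \<Longrightarrow> u < first_exit A Z \<Longrightarrow> Z u \<in> A"
proof -
  define U where "U = {u. 0 \<le> u \<and> Z u \<notin> A}"
  have U: "u \<in> U" if "T < u" for u
    unfolding U_def using that T outside by auto
  have bdd: "bdd_below U"
    unfolding U_def by (rule bdd_belowI[of _ 0]) auto
  have "U \<noteq> {}"
    using U[of "T + 1"] by auto
  then show "0 \<le> first_exit A Z"
    unfolding first_exit_def U_def[symmetric] by (rule cInf_greatest) (auto simp: U_def)
  show "first_exit A Z \<le> T"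
  proof (rule ccontr)
    assume "\<not> first_exit A Z \<le> T"
    then have "(first_exit A Z + T) / 2 \<in> U"
      by (intro U) auto
    then have "first_exit A Z \<le> (first_exit A Z + T) / 2"
      unfolding first_exit_def U_def[symmetric] by (rule cInf_lower[OF _ bdd])
    then show False
      using \<open>\<not> first_exit A Z \<le> T\<close> by simp
  qed
  show "Z u \<in> A" if "0 \<le> u" "u < first_exit A Z" for u
  proof (rule ccontr)
    assume "Z u \<notin> A"
    then have "first_exit A Z \<le> u"
      unfolding first_exit_def using that(1) by (intro cInf_lower bdd[unfolded U_def]) auto
    then show False
      using that(2) by simp
  qed
qed

lemma jtime_strict_mono:
  assumes pos: "\<forall>i. 0 < S i \<omega>" and "m < n"
  shows "jtime S m \<omega> < jtime S n \<omega>"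
  using assms(2)
proof (induction n)
  case (Suc n)
  then show ?case
    using pos[rule_format, of n] by (cases "m = n") (auto simp: jtime_def)
qed simp

lemma jtime_le_iff:
  assumes "\<forall>i. 0 < S i \<omega>"
  shows "jtime S m \<omega> \<le> jtime S n \<omega> \<longleftrightarrow> m \<le> n"
  using jtime_strict_mono[of S \<omega>, OF assms, of m n] jtime_strict_mono[of S \<omega>, OF assms, of n m]
  by (cases m n rule: linorder_cases) auto

lemma card_jumps_at_jtime:
  assumes "\<forall>i. 0 < S i \<omega>"
  shows "card {n. 0 < n \<and> jtime S n \<omega> \<le> jtime S k \<omega>} = k"
proof -
  have "{n. 0 < n \<and> jtime S n \<omega> \<le> jtime S k \<omega>} = {0<..k}"
    using jtime_le_iff[of S \<omega>, OF assms] by auto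
  then show ?thesis
    by simp
qed

lemma jtime_card_jumps_le:
  assumes pos: "\<forall>i. 0 < S i \<omega>" and "card {n. 0 < n \<and> jtime S n \<omega> \<le> T} \<noteq> 0"
  shows "jtime S (card {n. 0 < n \<and> jtime S n \<omega> \<le> T}) \<omega> \<le> T"
proof -
  define A where "A = {n. 0 < n \<and> jtime S n \<omega> \<le> T}"
  have "finite A" "A \<noteq> {}"
    using assms(2) unfolding A_def[symmetric] by (auto intro: card_ge_0_finite)
  define m where "m = Max A"
  have "m \<in> A"
    unfolding m_def using \<open>finite A\<close> \<open>A \<noteq> {}\<close> by (rule Max_in)
  have "A = {0<..m}"
  proof
    show "A \<subseteq> {0<..m}"
      using \<open>finite A\<close> unfolding m_def by (auto simp: A_def)
    show "{0<..m} \<subseteq> A"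
    proof
      fix n
      assume "n \<in> {0<..m}"
      then have "jtime S n \<omega> \<le> jtime S m \<omega>"
        using jtime_le_iff[of S \<omega>, OF pos] by simp
      then show "n \<in> A"
        using \<open>m \<in> A\<close> \<open>n \<in> {0<..m}\<close> unfolding A_def by auto
    qed
  qed
  then have "card A = m"
    by simp
  then show ?thesis
    using \<open>m \<in> A\<close> unfolding A_def by simp
qed

lemma first_exit_Qbox:
  fixes p :: "real \<Rightarrow> real^'d" and t \<rho> :: real and x :: "real^'d"
  assumes \<gamma>: "0 < \<gamma>" and rs: "r \<le> s" and \<alpha>: "0 \<le> \<alpha>" and r: "0 < r"
  defines "W \<equiv> \<lambda>u. (t + u, p u)"
  defines "\<tau> \<equiv> first_exit (Qbox \<gamma> \<alpha> \<rho> t x r) W"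
  shows "0 \<le> \<tau>" and "\<tau> \<le> \<gamma> * r powr \<alpha>"
    and "\<And>u. 0 \<le> u \<Longrightarrow> u < \<tau> \<Longrightarrow> p u \<in> lball \<rho> x r"
    and "W \<tau> \<notin> Qbox \<gamma> \<alpha> \<rho> t x s \<Longrightarrow> p \<tau> \<notin> lball \<rho> x s"
proof -
  have "0 \<le> \<gamma> * r powr \<alpha>"
    using \<gamma> by simp
  moreover have "W u \<notin> Qbox \<gamma> \<alpha> \<rho> t x r" if "\<gamma> * r powr \<alpha> < u" for u
    using that unfolding W_def Qbox_def by simp
  ultimately have \<tau>0: "0 \<le> \<tau>" and \<tau>_le: "\<tau> \<le> \<gamma> * r powr \<alpha>"
    and before: "\<And>u. 0 \<le> u \<Longrightarrow> u < \<tau> \<Longrightarrow> W u \<in> Qbox \<gamma> \<alpha> \<rho> t x r"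
    unfolding \<tau>_def using first_exit_le[of "\<gamma> * r powr \<alpha>" W] by blast+
  show "0 \<le> \<tau>" "\<tau> \<le> \<gamma> * r powr \<alpha>"
    by (fact \<tau>0 \<tau>_le)+
  show "p u \<in> lball \<rho> x r" if "0 \<le> u" "u < \<tau>" for u
    using before[OF that] unfolding W_def Qbox_def by simp
  have "\<gamma> * r powr \<alpha> \<le> \<gamma> * s powr \<alpha>"
    using powr_mono2[OF \<alpha>, of r s] r rs \<gamma> by simp
  then have "t + \<tau> \<in> {t .. t + \<gamma> * s powr \<alpha>}"
    using \<tau>0 \<tau>_le by simp
  then show "p \<tau> \<notin> lball \<rho> x s" if "W \<tau> \<notin> Qbox \<gamma> \<alpha> \<rho> t x s"
    using that unfolding W_def Qbox_def by simp
qed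

lemma pos_rho_last_jump:
  assumes pos: "\<forall>i. 0 < S i \<omega>"
  obtains m where "pos_rho \<rho> \<alpha> J S u \<omega> = (1 / \<rho>) *\<^sub>R lat (J m \<omega>)"
    and "m \<noteq> 0 \<Longrightarrow> jtime S m \<omega> \<le> \<rho> powr \<alpha> * u"
  using jtime_card_jumps_le[of S \<omega>, OF pos] that unfolding pos_rho_def ctmc_pos_def by blast

lemma pos_rho_at_jtime:
  assumes pos: "\<forall>i. 0 < S i \<omega>" and \<rho>: "0 < \<rho>"
  shows "pos_rho \<rho> \<alpha> J S (jtime S k \<omega> / \<rho> powr \<alpha>) \<omega> = (1 / \<rho>) *\<^sub>R lat (J k \<omega>)"
  using card_jumps_at_jtime[of S \<omega>, OF pos] \<rho> unfolding pos_rho_def ctmc_pos_def by simp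

lemma jump_across_annulus:
  fixes J :: "nat \<Rightarrow> 'w \<Rightarrow> int^'d" and S :: "nat \<Rightarrow> 'w \<Rightarrow> real"
  assumes pos: "\<forall>i. 0 < S i \<omega>" and \<rho>: "0 < \<rho>" and rs: "r < s"
    and start: "dist x ((1 / \<rho>) *\<^sub>R lat (J 0 \<omega>)) < s"
    and near: "\<And>u. 0 \<le> u \<Longrightarrow> u < \<tau> \<Longrightarrow> dist x (pos_rho \<rho> \<alpha> J S u \<omega>) < r"
    and far: "s \<le> dist x (pos_rho \<rho> \<alpha> J S \<tau> \<omega>)"
  shows "\<exists>n. \<rho> * (s - r) \<le> norm (lat (J (Suc n) \<omega>) - lat (J n \<omega>)) \<and> jtime S (Suc n) \<omega> \<le> \<rho> powr \<alpha> * \<tau>"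
proof -
  obtain m where m: "pos_rho \<rho> \<alpha> J S \<tau> \<omega> = (1 / \<rho>) *\<^sub>R lat (J m \<omega>)"
    and jm: "m \<noteq> 0 \<Longrightarrow> jtime S m \<omega> \<le> \<rho> powr \<alpha> * \<tau>"
    using pos_rho_last_jump[where S = S and \<omega> = \<omega>, OF pos] by metis
  have "m \<noteq> 0"
    using far start m by (metis leD)
  define u where "u = jtime S (m - 1) \<omega> / \<rho> powr \<alpha>"
  have "0 \<le> u"
    unfolding u_def jtime_def using pos by (simp add: sum_nonneg less_imp_le)
  moreover have "jtime S (m - 1) \<omega> < jtime S m \<omega>"
    using jtime_strict_mono[of S \<omega>, OF pos, of "m - 1" m] \<open>m \<noteq> 0\<close> by simp
  then have "u < \<tau>"
    unfolding u_def using jm[OF \<open>m \<noteq> 0\<close>] \<rho> by (simp add: divide_less_eq mult.commute)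
  ultimately have "dist x ((1 / \<rho>) *\<^sub>R lat (J (m - 1) \<omega>)) < r"
    using near pos_rho_at_jtime[where S = S and \<omega> = \<omega> and J = J and k = "m - 1", OF pos \<rho>]
    unfolding u_def by metis
  then have "s - r \<le> dist ((1 / \<rho>) *\<^sub>R lat (J (m - 1) \<omega>)) ((1 / \<rho>) *\<^sub>R lat (J m \<omega>))"
    using far dist_triangle[of x "(1 / \<rho>) *\<^sub>R lat (J m \<omega>)" "(1 / \<rho>) *\<^sub>R lat (J (m - 1) \<omega>)"]
    unfolding m by (simp add: dist_commute)
  also have "\<dots> = norm (lat (J m \<omega>) - lat (J (m - 1) \<omega>)) / \<rho>"
    unfolding dist_norm using \<rho> by (simp add: scaleR_diff_right[symmetric] norm_minus_commute)
  finally have "\<rho> * (s - r) \<le> norm (lat (J m \<omega>) - lat (J (m - 1) \<omega>))"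
    using \<rho> by (simp add: field_simps)
  then show ?thesis
    using \<open>m \<noteq> 0\<close> jm by (intro exI[of _ "m - 1"]) simp
qed

lemma exit_outside_big_jump:
  fixes J :: "nat \<Rightarrow> 'w \<Rightarrow> int^'d" and S :: "nat \<Rightarrow> 'w \<Rightarrow> real" and t :: real
  assumes pos: "\<forall>i. 0 < S i \<omega>" and J0: "J 0 \<omega> = z"
    and \<rho>: "0 < \<rho>" and \<gamma>: "0 < \<gamma>" and r: "0 < r" and rs: "r < s" and \<alpha>: "0 \<le> \<alpha>"
  defines "x \<equiv> (1 / \<rho>) *\<^sub>R lat z"
  defines "W \<equiv> (\<lambda>u. (t + u, pos_rho \<rho> \<alpha> J S u \<omega>))"
  assumes out: "W (first_exit (Qbox \<gamma> \<alpha> \<rho> t x r) W) \<notin> Qbox \<gamma> \<alpha> \<rho> t x s"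
  shows "\<exists>n. \<rho> * (s - r) \<le> norm (lat (J (Suc n) \<omega>) - lat (J n \<omega>)) \<and>
             jtime S (Suc n) \<omega> \<le> \<rho> powr \<alpha> * (\<gamma> * r powr \<alpha>)"
proof -
  define \<tau> where "\<tau> = first_exit (Qbox \<gamma> \<alpha> \<rho> t x r) W"
  note exit = first_exit_Qbox[where p = "\<lambda>u. pos_rho \<rho> \<alpha> J S u \<omega>" and t = t and \<rho> = \<rho> and x = x,
      OF \<gamma> less_imp_le[OF rs] \<alpha> r, folded W_def, folded \<tau>_def]
  have "\<exists>n. \<rho> * (s - r) \<le> norm (lat (J (Suc n) \<omega>) - lat (J n \<omega>)) \<and> jtime S (Suc n) \<omega> \<le> \<rho> powr \<alpha> * \<tau>"
  proof (rule jump_across_annulus[where S = S and \<omega> = \<omega>, OF pos \<rho> rs])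
    show "dist x ((1 / \<rho>) *\<^sub>R lat (J 0 \<omega>)) < s"
      using J0 r rs unfolding x_def by simp
    show "dist x (pos_rho \<rho> \<alpha> J S u \<omega>) < r" if "0 \<le> u" "u < \<tau>" for u
      using exit(3)[OF that] unfolding lball_def by simp
    have "pos_rho \<rho> \<alpha> J S \<tau> \<omega> \<notin> lball \<rho> x s"
      using exit(4) out unfolding \<tau>_def W_def by simp
    then show "s \<le> dist x (pos_rho \<rho> \<alpha> J S \<tau> \<omega>)"
      unfolding lball_def pos_rho_def by auto
  qed
  then show ?thesis
    using exit(2) \<rho> by (meson mult_left_mono order.trans powr_ge_zero)
qed

lemma card_long_holds_le:
  assumes pos: "\<forall>i. 0 < S i \<omega>" and \<delta>: "0 < \<delta>" and "jtime S m \<omega> \<le> T"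
  shows "card {i. i < m \<and> \<delta> < S i \<omega>} \<le> nat \<lfloor>T / \<delta>\<rfloor>"
proof -
  define A where "A = {i. i < m \<and> \<delta> < S i \<omega>}"
  have "\<delta> * card A = (\<Sum>i\<in>A. \<delta>)"
    by simp
  also have "\<dots> \<le> (\<Sum>i\<in>A. S i \<omega>)"
    by (rule sum_mono) (auto simp: A_def less_imp_le)
  also have "\<dots> \<le> (\<Sum>i<m. S i \<omega>)"
    by (rule sum_mono2) (auto simp: A_def less_imp_le pos)
  also have "\<dots> \<le> T"
    using assms(3) unfolding jtime_def .
  finally have "card A \<le> T / \<delta>"
    using \<delta> by (simp add: field_simps)
  then show ?thesis
    unfolding A_def[symmetric] by (simp add: le_nat_iff le_floor_iff)
qed

section \<open>Events of the jump chain\<close>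

lemma emeasure_le_by_partition:
  fixes f :: "'w \<Rightarrow> 'v::countable"
  assumes f: "f \<in> M \<rightarrow>\<^sub>M count_space UNIV" and A: "A \<in> sets M" and B: "B \<in> sets M"
    and le: "\<And>v. emeasure M (A \<inter> (f -` {v} \<inter> space M)) \<le> c * emeasure M (B \<inter> (f -` {v} \<inter> space M))"
  shows "emeasure M A \<le> c * emeasure M B"
proof -
  have fibre: "f -` {v} \<inter> space M \<in> sets M" for v
    using f by (simp add: measurable_count_space_eq2_countable)
  have sum_fibres: "emeasure M E = (\<integral>\<^sup>+ v. emeasure M (E \<inter> (f -` {v} \<inter> space M)) \<partial>count_space UNIV)"
    if "E \<in> sets M" for E
  proof -
    have "E = (\<Union>v. E \<inter> (f -` {v} \<inter> space M))"
      using sets.sets_into_space[OF that] by auto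
    also have "emeasure M \<dots> = (\<integral>\<^sup>+ v. emeasure M (E \<inter> (f -` {v} \<inter> space M)) \<partial>count_space UNIV)"
      by (rule emeasure_UN_countable) (auto simp: fibre that disjoint_family_on_def)
    finally show ?thesis .
  qed
  show ?thesis
    unfolding sum_fibres[OF A] sum_fibres[OF B]
    by (subst nn_integral_cmult[symmetric]) (auto intro!: nn_integral_mono le)
qed

lemma all_less_split: "j < n \<Longrightarrow> (\<forall>i<n. P i) \<longleftrightarrow> P j \<and> (\<forall>i\<in>{..<n}-{j}. P i)"
  by auto

lemma prod_lessThan_diff:
  fixes f g h :: "nat \<Rightarrow> 'a::comm_ring_1"
  assumes "j < n" and "f j = g j - h j" and "\<And>i. i \<noteq> j \<Longrightarrow> g i = f i \<and> h i = f i"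
  shows "(\<Prod>i<n. g i) - (\<Prod>i<n. h i) = (\<Prod>i<n. f i)"
proof -
  have split: "(\<Prod>i<n. k i) = k j * (\<Prod>i\<in>{..<n}-{j}. f i)" if "\<And>i. i \<noteq> j \<Longrightarrow> k i = f i" for k
  proof -
    have "(\<Prod>i\<in>{..<n}-{j}. k i) = (\<Prod>i\<in>{..<n}-{j}. f i)"
      using that by (intro prod.cong) auto
    then show ?thesis
      using assms(1) by (simp add: prod.remove)
  qed
  show ?thesis
    using split[of g] split[of h] split[of f] assms(2,3) by (simp add: algebra_simps)
qed

lemma (in finite_measure) measure_mono_AE:
  assumes "AE x in M. x \<in> A \<longrightarrow> x \<in> B" and "B \<in> sets M"
  shows "measure M A \<le> measure M B"
proof (cases "A \<in> sets M")
  case True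
  then show ?thesis
    using emeasure_mono_AE[OF assms] assms(2) by (simp add: emeasure_eq_measure)
qed (simp add: measure_notin_sets)

lemma map_upt_eq_iff: "map f [0..<k] = l \<longleftrightarrow> length l = k \<and> (\<forall>i<k. f i = l ! i)"
  by (auto simp: list_eq_iff_nth_eq)

lemma holding_pattern_iff:
  fixes h :: "nat \<Rightarrow> real"
  assumes "0 \<le> \<delta>"
  shows "(\<forall>i<k. 0 < h i) \<and> (\<forall>i<k. (\<delta> < h i) = b ! i) \<longleftrightarrow>
    (\<forall>i<k. if i \<in> {i. i < k \<and> \<not> b ! i} then 0 < h i \<and> h i \<le> \<delta> else \<delta> < h i)"
  using assms by (fastforce split: if_splits)

locale ctmc =
  fixes M :: "'w measure" and C :: "int^'d \<Rightarrow> int^'d \<Rightarrow> real" and z :: "int^'d"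
    and J :: "nat \<Rightarrow> 'w \<Rightarrow> int^'d" and S :: "nat \<Rightarrow> 'w \<Rightarrow> real"
  assumes is_ctmc: "is_ctmc M C z J S"
    and condA1: "condA1 C"
    and jump_probs_sum_one: "\<And>x. (\<integral>\<^sup>+ y. ennreal (jump_prob C x y) \<partial>count_space UNIV) = 1"
begin

sublocale prob_space M
  using is_ctmc unfolding is_ctmc_def by blast

lemma J_measurable [measurable]: "J n \<in> M \<rightarrow>\<^sub>M count_space UNIV"
  using is_ctmc unfolding is_ctmc_def by blast

lemma S_measurable [measurable]: "S n \<in> borel_measurable M"
  using is_ctmc unfolding is_ctmc_def by blast

definition path_event :: "real \<Rightarrow> nat \<Rightarrow> (nat \<Rightarrow> int^'d) \<Rightarrow> nat set \<Rightarrow> (nat \<Rightarrow> real) \<Rightarrow> 'w set" where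
  "path_event \<delta> n xs F ts = {\<omega> \<in> space M. (\<forall>i\<le>n. J i \<omega> = xs i) \<and>
     (\<forall>i<n. if i \<in> F then 0 < S i \<omega> \<and> S i \<omega> \<le> \<delta> else ts i < S i \<omega>)}"

definition path_weight :: "real \<Rightarrow> (nat \<Rightarrow> int^'d) \<Rightarrow> nat set \<Rightarrow> (nat \<Rightarrow> real) \<Rightarrow> nat \<Rightarrow> real" where
  "path_weight \<delta> xs F ts i =
     (if i \<in> F then 1 - exp (- rate C (xs i) * \<delta>) else exp (- rate C (xs i) * ts i))"

lemma measure_path_prefix:
  assumes "\<And>i. 0 \<le> ts i"
  shows "measure M {\<omega> \<in> space M. (\<forall>i\<le>n. J i \<omega> = xs i) \<and> (\<forall>i<n. ts i < S i \<omega>)}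
        = (if xs 0 = z then 1 else 0) *
          (\<Prod>i<n. jump_prob C (xs i) (xs (Suc i)) * exp (- rate C (xs i) * ts i))"
  using is_ctmc assms unfolding is_ctmc_def by blast

lemma path_event_sets [measurable]: "path_event \<delta> n xs F ts \<in> sets M"
  unfolding path_event_def by measurable

lemma path_weight_nonneg: "0 \<le> \<delta> \<Longrightarrow> 0 \<le> path_weight \<delta> xs F ts i"
  unfolding path_weight_def using rate_nonneg[OF condA1, of "xs i"] by simp

lemma path_event_insert:
  assumes "j < n" "j \<notin> F" "0 \<le> \<delta>"
  shows "path_event \<delta> n xs (insert j F) ts
    = path_event \<delta> n xs F (ts(j := 0)) - path_event \<delta> n xs F (ts(j := \<delta>))"
  using assms unfolding path_event_def all_less_split[OF \<open>j < n\<close>] by auto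

lemma measure_path_event:
  assumes "finite F" "\<And>i. 0 \<le> ts i" "0 \<le> \<delta>"
  shows "measure M (path_event \<delta> n xs F ts) = (if xs 0 = z then 1 else 0) *
          (\<Prod>i<n. jump_prob C (xs i) (xs (Suc i)) * path_weight \<delta> xs F ts i)"
  using assms(1,2)
proof (induction F arbitrary: ts rule: finite_induct)
  case empty
  then show ?case
    using measure_path_prefix[OF empty.prems] unfolding path_event_def path_weight_def by simp
next
  case (insert j F)
  show ?case
  proof (cases "j < n")
    case True
    have ts_upd_nonneg: "0 \<le> (ts(j := 0)) i" "0 \<le> (ts(j := \<delta>)) i" for i
      using insert.prems \<open>0 \<le> \<delta>\<close> by auto
    have "path_event \<delta> n xs F (ts(j := \<delta>)) \<subseteq> path_event \<delta> n xs F (ts(j := 0))"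
      using \<open>0 \<le> \<delta>\<close> unfolding path_event_def all_less_split[OF True] by auto
    then have "measure M (path_event \<delta> n xs (insert j F) ts) =
       measure M (path_event \<delta> n xs F (ts(j := 0))) - measure M (path_event \<delta> n xs F (ts(j := \<delta>)))"
      unfolding path_event_insert[OF True insert.hyps(2) \<open>0 \<le> \<delta>\<close>] by (intro finite_measure_Diff) auto
    also have "\<dots> = (if xs 0 = z then 1 else 0) *
        ((\<Prod>i<n. jump_prob C (xs i) (xs (Suc i)) * path_weight \<delta> xs F (ts(j := 0)) i)
          - (\<Prod>i<n. jump_prob C (xs i) (xs (Suc i)) * path_weight \<delta> xs F (ts(j := \<delta>)) i))"
      unfolding insert.IH[OF ts_upd_nonneg(1)] insert.IH[OF ts_upd_nonneg(2)] by (simp only: right_diff_distrib)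
    also have "(\<Prod>i<n. jump_prob C (xs i) (xs (Suc i)) * path_weight \<delta> xs F (ts(j := 0)) i)
          - (\<Prod>i<n. jump_prob C (xs i) (xs (Suc i)) * path_weight \<delta> xs F (ts(j := \<delta>)) i)
        = (\<Prod>i<n. jump_prob C (xs i) (xs (Suc i)) * path_weight \<delta> xs (insert j F) ts i)"
      using True insert.hyps(2) by (intro prod_lessThan_diff) (auto simp: path_weight_def algebra_simps)
    finally show ?thesis .
  next
    case False
    then have "i \<in> insert j F \<longleftrightarrow> i \<in> F" if "i < n" for i
      using that by auto
    then have "path_event \<delta> n xs (insert j F) ts = path_event \<delta> n xs F ts"
      unfolding path_event_def by (intro Collect_cong conj_cong refl all_cong imp_cong) simp_all
    moreover have "path_weight \<delta> xs (insert j F) ts i = path_weight \<delta> xs F ts i" if "i < n" for i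
      using False that by (auto simp: path_weight_def)
    ultimately show ?thesis
      using insert by simp
  qed
qed

definition path_event_to ::
    "real \<Rightarrow> nat \<Rightarrow> (nat \<Rightarrow> int^'d) \<Rightarrow> nat set \<Rightarrow> (nat \<Rightarrow> real) \<Rightarrow> (int^'d) set \<Rightarrow> 'w set" where
  "path_event_to \<delta> n xs F ts Y = {\<omega> \<in> space M. (\<forall>i\<le>n. J i \<omega> = xs i) \<and> J (Suc n) \<omega> \<in> Y \<and>
     (\<forall>i<Suc n. if i \<in> F then 0 < S i \<omega> \<and> S i \<omega> \<le> \<delta> else ts i < S i \<omega>)}"

lemma path_event_to_sets [measurable]: "path_event_to \<delta> n xs F ts Y \<in> sets M"
  unfolding path_event_to_def by measurable

lemma emeasure_path_event_to:
  assumes "finite F" "\<And>i. 0 \<le> ts i" "0 \<le> \<delta>"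
  shows "emeasure M (path_event_to \<delta> n xs F ts Y) = ennreal ((if xs 0 = z then 1 else 0) *
          (\<Prod>i<n. jump_prob C (xs i) (xs (Suc i)) * path_weight \<delta> xs F ts i) * path_weight \<delta> xs F ts n)
         * (\<integral>\<^sup>+ y. ennreal (jump_prob C (xs n) y) \<partial>count_space Y)"
proof -
  define X where "X y = path_event \<delta> (Suc n) (xs(Suc n := y)) F ts" for y
  define A where "A = (if xs 0 = z then 1 else 0) *
          (\<Prod>i<n. jump_prob C (xs i) (xs (Suc i)) * path_weight \<delta> xs F ts i) * path_weight \<delta> xs F ts n"
  have "0 \<le> A"
    unfolding A_def using jump_prob_nonneg[OF condA1] path_weight_nonneg[OF assms(3)]
    by (auto intro!: mult_nonneg_nonneg prod_nonneg)
  have weight_upd: "path_weight \<delta> (xs(Suc n := y)) F ts i = path_weight \<delta> xs F ts i" if "i \<le> n" for i y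
    using that unfolding path_weight_def by auto
  have measure_X: "measure M (X y) = A * jump_prob C (xs n) y" for y
  proof -
    have "(\<Prod>i<n. jump_prob C ((xs(Suc n := y)) i) ((xs(Suc n := y)) (Suc i)) * path_weight \<delta> (xs(Suc n := y)) F ts i)
        = (\<Prod>i<n. jump_prob C (xs i) (xs (Suc i)) * path_weight \<delta> xs F ts i)"
      by (rule prod.cong) (auto simp: weight_upd)
    then show ?thesis
      unfolding X_def measure_path_event[OF assms] A_def using weight_upd[of n y] by (simp add: algebra_simps)
  qed
  have "path_event_to \<delta> n xs F ts Y = (\<Union>y\<in>Y. X y)"
    unfolding path_event_to_def X_def path_event_def by (auto simp: le_Suc_eq)
  moreover have "disjoint_family_on X Y"
    unfolding disjoint_family_on_def X_def path_event_def by auto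
  ultimately have "emeasure M (path_event_to \<delta> n xs F ts Y) = (\<integral>\<^sup>+ y. emeasure M (X y) \<partial>count_space Y)"
    using emeasure_UN_countable[of Y X M] by (simp add: X_def)
  also have "\<dots> = (\<integral>\<^sup>+ y. ennreal A * ennreal (jump_prob C (xs n) y) \<partial>count_space Y)"
    using \<open>0 \<le> A\<close> jump_prob_nonneg[OF condA1]
    by (intro nn_integral_cong) (simp add: emeasure_eq_measure measure_X ennreal_mult)
  also have "\<dots> = ennreal A * (\<integral>\<^sup>+ y. ennreal (jump_prob C (xs n) y) \<partial>count_space Y)"
    by (rule nn_integral_cmult) auto
  finally show ?thesis
    unfolding A_def .
qed

text \<open>The pattern takes countably many values, and on each of its fibres the events below become
  path events; this is how their probabilities are compared.\<close>

definition path_pattern :: "real \<Rightarrow> nat \<Rightarrow> nat \<Rightarrow> 'w \<Rightarrow> (int^'d) list \<times> bool list" where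
  "path_pattern \<delta> n k \<omega> = (map (\<lambda>i. J i \<omega>) [0..<Suc n], map (\<lambda>i. \<delta> < S i \<omega>) [0..<k])"

lemma path_pattern_fibre:
  "path_pattern \<delta> n k -` {(l, b)} \<inter> space M = (if length l = Suc n \<and> length b = k then
    {\<omega>\<in>space M. (\<forall>i\<le>n. J i \<omega> = l ! i) \<and> (\<forall>i<k. (\<delta> < S i \<omega>) = b ! i)} else {})"
proof -
  have "path_pattern \<delta> n k -` {(l, b)} \<inter> space M = {\<omega>\<in>space M.
      map (\<lambda>i. J i \<omega>) [0..<Suc n] = l \<and> map (\<lambda>i. \<delta> < S i \<omega>) [0..<k] = b}"
    by (auto simp: path_pattern_def simp del: upt_Suc)
  then show ?thesis
    by (simp only: map_upt_eq_iff less_Suc_eq_le) auto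
qed

lemma path_pattern_measurable [measurable]: "path_pattern \<delta> n k \<in> M \<rightarrow>\<^sub>M count_space UNIV"
  unfolding measurable_count_space_eq2_countable
proof (intro conjI ballI)
  fix v :: "(int^'d) list \<times> bool list"
  obtain l b where v: "v = (l, b)"
    by (cases v)
  have "{\<omega>\<in>space M. (\<forall>i\<le>n. J i \<omega> = l ! i) \<and> (\<forall>i<k. (\<delta> < S i \<omega>) = b ! i)} \<in> sets M"
    by measurable
  then show "path_pattern \<delta> n k -` {v} \<inter> space M \<in> sets M"
    unfolding v path_pattern_fibre by simp
qed auto

lemma emeasure_holding_times_pos_le_Suc:
  "emeasure M {\<omega>\<in>space M. \<forall>i<n. 0 < S i \<omega>} \<le> emeasure M {\<omega>\<in>space M. \<forall>i<Suc n. 0 < S i \<omega>}"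
proof -
  have "emeasure M {\<omega>\<in>space M. \<forall>i<n. 0 < S i \<omega>} \<le> 1 * emeasure M {\<omega>\<in>space M. \<forall>i<Suc n. 0 < S i \<omega>}"
  proof (rule emeasure_le_by_partition[OF path_pattern_measurable[of 0 n 0]])
    fix v :: "(int^'d) list \<times> bool list"
    obtain l b where v: "v = (l, b)"
      by (cases v)
    define xs where "xs i = l ! i" for i
    show "emeasure M ({\<omega>\<in>space M. \<forall>i<n. 0 < S i \<omega>} \<inter> (path_pattern 0 n 0 -` {v} \<inter> space M))
       \<le> 1 * emeasure M ({\<omega>\<in>space M. \<forall>i<Suc n. 0 < S i \<omega>} \<inter> (path_pattern 0 n 0 -` {v} \<inter> space M))"
    proof (cases "length l = Suc n \<and> length b = 0")
      case True
      have "{\<omega>\<in>space M. \<forall>i<n. 0 < S i \<omega>} \<inter> (path_pattern 0 n 0 -` {v} \<inter> space M) = path_event 0 n xs {} (\<lambda>_. 0)"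
        unfolding v path_pattern_fibre path_event_def xs_def using True by auto
      moreover have "{\<omega>\<in>space M. \<forall>i<Suc n. 0 < S i \<omega>} \<inter> (path_pattern 0 n 0 -` {v} \<inter> space M)
          = path_event_to 0 n xs {} (\<lambda>_. 0) UNIV"
        unfolding v path_pattern_fibre path_event_to_def xs_def using True by auto
      ultimately show ?thesis
        by (simp add: emeasure_path_event_to jump_probs_sum_one)
          (simp add: emeasure_eq_measure measure_path_event path_weight_def)
    qed (auto simp: v path_pattern_fibre)
  qed auto
  then show ?thesis
    by simp
qed

lemma prob_holding_times_pos: "prob {\<omega>\<in>space M. \<forall>i<n. 0 < S i \<omega>} = 1"
proof (induction n)
  case (Suc n)
  then have "1 \<le> prob {\<omega>\<in>space M. \<forall>i<Suc n. 0 < S i \<omega>}"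
    using emeasure_holding_times_pos_le_Suc[of n] by (simp add: emeasure_eq_measure)
  then show ?case
    using prob_le_1 by (simp add: antisym)
qed (simp add: prob_space)

lemma AE_holding_times_pos: "AE \<omega> in M. \<forall>i. 0 < S i \<omega>"
proof -
  have "AE \<omega> in M. \<forall>i<Suc n. 0 < S i \<omega>" for n
    using prob_holding_times_pos[of "Suc n"] prob_eq_1[of "{\<omega>\<in>space M. \<forall>i<Suc n. 0 < S i \<omega>}"] by auto
  then have "AE \<omega> in M. \<forall>n. \<forall>i<Suc n. 0 < S i \<omega>"
    by (simp add: AE_all_countable)
  then show ?thesis
    by eventually_elim auto
qed

lemma AE_start: "AE \<omega> in M. J 0 \<omega> = z"
proof -
  have "prob {\<omega>\<in>space M. J 0 \<omega> = z} = 1"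
    using measure_path_prefix[of "\<lambda>_. 0" 0 "\<lambda>_. z"] by simp
  then show ?thesis
    using prob_eq_1[of "{\<omega>\<in>space M. J 0 \<omega> = z}"] by auto
qed

lemma holding_pattern_fibre:
  assumes \<delta>: "0 \<le> \<delta>" and "length l = Suc n" "length b = k"
  shows "{\<omega>\<in>space M. (\<forall>i<k. 0 < S i \<omega>) \<and> P \<omega> (card {i. i < k \<and> \<delta> < S i \<omega>})}
      \<inter> (path_pattern \<delta> n k -` {(l, b)} \<inter> space M)
    = {\<omega>\<in>space M. (\<forall>i\<le>n. J i \<omega> = l ! i) \<and>
        (\<forall>i<k. if i \<in> {i. i < k \<and> \<not> b ! i} then 0 < S i \<omega> \<and> S i \<omega> \<le> \<delta> else \<delta> < S i \<omega>) \<and>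
        P \<omega> (card {i. i < k \<and> b ! i})}"
proof -
  have "{\<omega>\<in>space M. (\<forall>i<k. 0 < S i \<omega>) \<and> P \<omega> (card {i. i < k \<and> \<delta> < S i \<omega>})}
      \<inter> (path_pattern \<delta> n k -` {(l, b)} \<inter> space M)
    = {\<omega>\<in>space M. (\<forall>i\<le>n. J i \<omega> = l ! i) \<and> ((\<forall>i<k. 0 < S i \<omega>) \<and> (\<forall>i<k. (\<delta> < S i \<omega>) = b ! i)) \<and>
        P \<omega> (card {i. i < k \<and> \<delta> < S i \<omega>})}"
    unfolding path_pattern_fibre using assms(2,3) by auto
  also have "\<dots> = {\<omega>\<in>space M. (\<forall>i\<le>n. J i \<omega> = l ! i) \<and> ((\<forall>i<k. 0 < S i \<omega>) \<and> (\<forall>i<k. (\<delta> < S i \<omega>) = b ! i)) \<and>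
        P \<omega> (card {i. i < k \<and> b ! i})}"
  proof (intro Collect_cong conj_cong refl)
    fix \<omega>
    assume "(\<forall>i<k. 0 < S i \<omega>) \<and> (\<forall>i<k. (\<delta> < S i \<omega>) = b ! i)"
    then have "{i. i < k \<and> \<delta> < S i \<omega>} = {i. i < k \<and> b ! i}"
      by auto
    then show "P \<omega> (card {i. i < k \<and> \<delta> < S i \<omega>}) = P \<omega> (card {i. i < k \<and> b ! i})"
      by simp
  qed
  finally show ?thesis
    unfolding holding_pattern_iff[OF \<delta>] .
qed

lemma emeasure_big_jump_le:
  assumes \<delta>: "0 \<le> \<delta>"
    and far: "\<And>x. (\<integral>\<^sup>+ y. ennreal (jump_prob C x y) \<partial>count_space {y. R \<le> norm (lat y - lat x)}) \<le> c"
  shows "emeasure M {\<omega>\<in>space M. (\<forall>i<Suc n. 0 < S i \<omega>) \<and> R \<le> norm (lat (J (Suc n) \<omega>) - lat (J n \<omega>))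
            \<and> card {i. i < Suc n \<and> \<delta> < S i \<omega>} \<le> K}
    \<le> c * emeasure M {\<omega>\<in>space M. (\<forall>i<Suc n. 0 < S i \<omega>) \<and> card {i. i < Suc n \<and> \<delta> < S i \<omega>} \<le> K}"
    (is "emeasure M ?A \<le> c * emeasure M ?B")
proof (rule emeasure_le_by_partition[OF path_pattern_measurable[of \<delta> n "Suc n"]])
  fix v :: "(int^'d) list \<times> bool list"
  obtain l b where v: "v = (l, b)"
    by (cases v)
  define xs where "xs i = l ! i" for i
  define F where "F = {i. i < Suc n \<and> \<not> b ! i}"
  let ?fibre = "path_pattern \<delta> n (Suc n) -` {v} \<inter> space M"
  show "emeasure M (?A \<inter> ?fibre) \<le> c * emeasure M (?B \<inter> ?fibre)"
  proof (cases "length l = Suc n \<and> length b = Suc n")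
    case True
    have "?A \<inter> ?fibre = (if card {i. i < Suc n \<and> b ! i} \<le> K
        then path_event_to \<delta> n xs F (\<lambda>_. \<delta>) {y. R \<le> norm (lat y - lat (xs n))} else {})"
      using holding_pattern_fibre[OF \<delta> True[THEN conjunct1] True[THEN conjunct2],
          of "\<lambda>\<omega> c. R \<le> norm (lat (J (Suc n) \<omega>) - lat (J n \<omega>)) \<and> c \<le> K"]
      unfolding v path_event_to_def xs_def F_def by auto
    moreover have "?B \<inter> ?fibre = (if card {i. i < Suc n \<and> b ! i} \<le> K
        then path_event_to \<delta> n xs F (\<lambda>_. \<delta>) UNIV else {})"
      using holding_pattern_fibre[OF \<delta> True[THEN conjunct1] True[THEN conjunct2], of "\<lambda>\<omega> c. c \<le> K"]
      unfolding v path_event_to_def xs_def F_def by auto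
    moreover have "finite F"
      unfolding F_def by auto
    ultimately show ?thesis
      using \<delta> far[of "xs n"]
      by (simp add: emeasure_path_event_to jump_probs_sum_one mult.commute[of c] mult_left_mono)
  next
    case False
    then have "?A \<inter> ?fibre = {}"
      unfolding v path_pattern_fibre by auto
    then show ?thesis
      by simp
  qed
qed auto

text \<open>Whatever the past, the next holding time exceeds \<open>\<delta>\<close> with probability at least
  \<open>exp (- Q \<delta>)\<close>.\<close>

lemma emeasure_path_event_le_long_hold:
  assumes "finite F" "m \<notin> F" and \<delta>: "0 \<le> \<delta>" and Q: "\<And>x. rate C x \<le> Q"
  shows "emeasure M (path_event \<delta> m xs F (\<lambda>_. \<delta>))
    \<le> ennreal (exp (Q * \<delta>)) * emeasure M (path_event_to \<delta> m xs F (\<lambda>_. \<delta>) UNIV)"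
proof -
  define B where "B = (if xs 0 = z then 1 else 0) *
    (\<Prod>i<m. jump_prob C (xs i) (xs (Suc i)) * path_weight \<delta> xs F (\<lambda>_. \<delta>) i)"
  have "0 \<le> B"
    unfolding B_def using jump_prob_nonneg[OF condA1] path_weight_nonneg[OF \<delta>]
    by (auto intro!: mult_nonneg_nonneg prod_nonneg)
  have "1 \<le> exp (Q * \<delta>) * exp (- rate C (xs m) * \<delta>)"
    using Q[of "xs m"] \<delta> by (simp add: mult_right_mono flip: exp_add distrib_right)
  from mult_left_mono[OF this \<open>0 \<le> B\<close>]
  have "B \<le> exp (Q * \<delta>) * (B * path_weight \<delta> xs F (\<lambda>_. \<delta>) m)"
    using \<open>m \<notin> F\<close> unfolding path_weight_def by (simp add: algebra_simps)
  then show ?thesis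
    using assms \<open>0 \<le> B\<close>
    by (simp add: emeasure_path_event_to jump_probs_sum_one B_def[symmetric])
      (simp add: emeasure_eq_measure measure_path_event B_def[symmetric] ennreal_mult'[symmetric] ennreal_leI)
qed

lemma emeasure_long_holds_eq_le:
  assumes \<delta>: "0 \<le> \<delta>" and Q: "\<And>x. rate C x \<le> Q"
  shows "emeasure M {\<omega>\<in>space M. (\<forall>i<m. 0 < S i \<omega>) \<and> card {i. i < m \<and> \<delta> < S i \<omega>} = k}
    \<le> ennreal (exp (Q * \<delta>)) * emeasure M {\<omega>\<in>space M. (\<forall>i<m. 0 < S i \<omega>)
          \<and> card {i. i < m \<and> \<delta> < S i \<omega>} = k \<and> \<delta> < S m \<omega>}"
    (is "emeasure M ?A \<le> _ * emeasure M ?B")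
proof (rule emeasure_le_by_partition[OF path_pattern_measurable[of \<delta> m m]])
  fix v :: "(int^'d) list \<times> bool list"
  obtain l b where v: "v = (l, b)"
    by (cases v)
  define xs where "xs i = l ! i" for i
  define F where "F = {i. i < m \<and> \<not> b ! i}"
  let ?fibre = "path_pattern \<delta> m m -` {v} \<inter> space M"
  show "emeasure M (?A \<inter> ?fibre) \<le> ennreal (exp (Q * \<delta>)) * emeasure M (?B \<inter> ?fibre)"
  proof (cases "length l = Suc m \<and> length b = m")
    case True
    have "?A \<inter> ?fibre = (if card {i. i < m \<and> b ! i} = k then path_event \<delta> m xs F (\<lambda>_. \<delta>) else {})"
      using holding_pattern_fibre[OF \<delta> True[THEN conjunct1] True[THEN conjunct2], of "\<lambda>\<omega> c. c = k"]
      unfolding v path_event_def xs_def F_def by auto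
    moreover have "?B \<inter> ?fibre = (if card {i. i < m \<and> b ! i} = k
        then path_event_to \<delta> m xs F (\<lambda>_. \<delta>) UNIV else {})"
      using holding_pattern_fibre[OF \<delta> True[THEN conjunct1] True[THEN conjunct2], of "\<lambda>\<omega> c. c = k \<and> \<delta> < S m \<omega>"]
      unfolding v path_event_to_def xs_def F_def by (auto simp: less_Suc_eq)
    moreover have "finite F" "m \<notin> F"
      unfolding F_def by auto
    ultimately show ?thesis
      using emeasure_path_event_le_long_hold[OF _ _ \<delta> Q] by simp
  next
    case False
    then have "?A \<inter> ?fibre = {}"
      unfolding v path_pattern_fibre by auto
    then show ?thesis
      by simp
  qed
qed auto

text \<open>Each time exactly \<open>k\<close> of the first \<open>m\<close> holding times are long, the \<open>m\<close>-th one is long as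
  well with probability at least \<open>exp (- Q \<delta>)\<close>; the resulting events \<open>D m\<close> are disjoint, since on
  \<open>D m\<close> the \<open>m\<close>-th holding time is the \<open>(k+1)\<close>-st long one.\<close>

lemma suminf_emeasure_long_holds_eq_le:
  assumes \<delta>: "0 \<le> \<delta>" and Q: "\<And>x. rate C x \<le> Q"
  shows "(\<Sum>m. emeasure M {\<omega>\<in>space M. (\<forall>i<m. 0 < S i \<omega>) \<and> card {i. i < m \<and> \<delta> < S i \<omega>} = k})
     \<le> ennreal (exp (Q * \<delta>))"
proof -
  define D where "D m = {\<omega>\<in>space M. (\<forall>i<m. 0 < S i \<omega>)
          \<and> card {i. i < m \<and> \<delta> < S i \<omega>} = k \<and> \<delta> < S m \<omega>}" for m
  have disjoint: "D m \<inter> D m' = {}" if "m < m'" for m m'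
  proof -
    have "card {i. i < m' \<and> \<delta> < S i \<omega>} \<noteq> k" if "\<omega> \<in> D m" for \<omega>
    proof -
      have "insert m {i. i < m \<and> \<delta> < S i \<omega>} \<subseteq> {i. i < m' \<and> \<delta> < S i \<omega>}"
        using \<open>\<omega> \<in> D m\<close> \<open>m < m'\<close> unfolding D_def by auto
      then have "card (insert m {i. i < m \<and> \<delta> < S i \<omega>}) \<le> card {i. i < m' \<and> \<delta> < S i \<omega>}"
        by (rule card_mono[rotated]) auto
      then show ?thesis
        using \<open>\<omega> \<in> D m\<close> unfolding D_def by simp
    qed
    then show ?thesis
      unfolding D_def by blast
  qed
  have "disjoint_family D"
    unfolding disjoint_family_on_def by (metis disjoint inf_commute nat_neq_iff)
  have "range D \<subseteq> sets M"
    unfolding D_def by auto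
  have "(\<Sum>m. emeasure M {\<omega>\<in>space M. (\<forall>i<m. 0 < S i \<omega>) \<and> card {i. i < m \<and> \<delta> < S i \<omega>} = k})
     \<le> (\<Sum>m. ennreal (exp (Q * \<delta>)) * emeasure M (D m))"
    unfolding D_def by (intro suminf_le summableI emeasure_long_holds_eq_le[OF \<delta> Q])
  also have "\<dots> = ennreal (exp (Q * \<delta>)) * emeasure M (\<Union>m. D m)"
    using suminf_emeasure[OF \<open>range D \<subseteq> sets M\<close> \<open>disjoint_family D\<close>] by simp
  also have "\<dots> \<le> ennreal (exp (Q * \<delta>))"
    using emeasure_le_1 by (simp add: mult_left_le)
  finally show ?thesis .
qed

lemma suminf_emeasure_long_holds_le:
  assumes \<delta>: "0 \<le> \<delta>" and Q: "\<And>x. rate C x \<le> Q"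
  shows "(\<Sum>m. emeasure M {\<omega>\<in>space M. (\<forall>i<m. 0 < S i \<omega>) \<and> card {i. i < m \<and> \<delta> < S i \<omega>} \<le> K})
     \<le> ennreal ((real K + 1) * exp (Q * \<delta>))"
proof -
  let ?u = "\<lambda>m k. emeasure M {\<omega>\<in>space M. (\<forall>i<m. 0 < S i \<omega>) \<and> card {i. i < m \<and> \<delta> < S i \<omega>} = k}"
  have "(\<Sum>m. emeasure M {\<omega>\<in>space M. (\<forall>i<m. 0 < S i \<omega>) \<and> card {i. i < m \<and> \<delta> < S i \<omega>} \<le> K})
       \<le> (\<Sum>m. \<Sum>k\<le>K. ?u m k)"
  proof (intro suminf_le summableI)
    fix m
    have "{\<omega>\<in>space M. (\<forall>i<m. 0 < S i \<omega>) \<and> card {i. i < m \<and> \<delta> < S i \<omega>} \<le> K}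
      = (\<Union>k\<in>{..K}. {\<omega>\<in>space M. (\<forall>i<m. 0 < S i \<omega>) \<and> card {i. i < m \<and> \<delta> < S i \<omega>} = k})"
      by auto
    then show "emeasure M {\<omega>\<in>space M. (\<forall>i<m. 0 < S i \<omega>) \<and> card {i. i < m \<and> \<delta> < S i \<omega>} \<le> K}
        \<le> (\<Sum>k\<le>K. ?u m k)"
      by (auto intro!: emeasure_subadditive_finite)
  qed
  also have "\<dots> = (\<Sum>k\<le>K. \<Sum>m. ?u m k)"
    by (rule suminf_sum) auto
  also have "\<dots> \<le> (\<Sum>k\<le>K. ennreal (exp (Q * \<delta>)))"
    by (intro sum_mono suminf_emeasure_long_holds_eq_le[OF \<delta> Q])
  also have "\<dots> = ennreal ((real K + 1) * exp (Q * \<delta>))"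
    by (simp add: ennreal_mult' ennreal_of_nat_eq_real_of_nat add.commute)
  finally show ?thesis .
qed

lemma emeasure_big_jump_few_long_holds_le:
  assumes \<delta>: "0 \<le> \<delta>" and Q: "\<And>x. rate C x \<le> Q"
    and far: "\<And>x. (\<integral>\<^sup>+ y. ennreal (jump_prob C x y) \<partial>count_space {y. R \<le> norm (lat y - lat x)}) \<le> c"
  shows "emeasure M (\<Union>n. {\<omega>\<in>space M. (\<forall>i<Suc n. 0 < S i \<omega>) \<and> R \<le> norm (lat (J (Suc n) \<omega>) - lat (J n \<omega>))
            \<and> card {i. i < Suc n \<and> \<delta> < S i \<omega>} \<le> K})
      \<le> c * ennreal ((real K + 1) * exp (Q * \<delta>))"
proof -
  let ?few = "\<lambda>m. emeasure M {\<omega>\<in>space M. (\<forall>i<m. 0 < S i \<omega>) \<and> card {i. i < m \<and> \<delta> < S i \<omega>} \<le> K}"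
  have "emeasure M (\<Union>n. {\<omega>\<in>space M. (\<forall>i<Suc n. 0 < S i \<omega>) \<and> R \<le> norm (lat (J (Suc n) \<omega>) - lat (J n \<omega>))
            \<and> card {i. i < Suc n \<and> \<delta> < S i \<omega>} \<le> K})
     \<le> (\<Sum>n. emeasure M {\<omega>\<in>space M. (\<forall>i<Suc n. 0 < S i \<omega>) \<and> R \<le> norm (lat (J (Suc n) \<omega>) - lat (J n \<omega>))
            \<and> card {i. i < Suc n \<and> \<delta> < S i \<omega>} \<le> K})"
    by (rule emeasure_subadditive_countably) auto
  also have "\<dots> \<le> (\<Sum>n. c * ?few (Suc n))"
    by (intro suminf_le summableI emeasure_big_jump_le[OF \<delta> far])
  also have "\<dots> \<le> c * (\<Sum>n. ?few n)"
    using suminf_offset[of ?few 1] by (simp add: mult_left_mono)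
  also have "\<dots> \<le> c * ennreal ((real K + 1) * exp (Q * \<delta>))"
    by (intro mult_left_mono suminf_emeasure_long_holds_le[OF \<delta> Q]) simp
  finally show ?thesis .
qed

text \<open>With \<open>\<delta> = 1/Q\<close>, before time \<open>T\<close> at most \<open>Q T\<close> holding times are longer than \<open>\<delta>\<close>.\<close>

lemma prob_big_jump_before_le:
  assumes Q: "0 < Q" "\<And>x. rate C x \<le> Q"
    and far: "\<And>x. (\<integral>\<^sup>+ y. ennreal (jump_prob C x y) \<partial>count_space {y. R \<le> norm (lat y - lat x)}) \<le> ennreal p"
    and "0 \<le> p" "0 \<le> T"
  shows "measure M {\<omega>\<in>space M. \<exists>n. R \<le> norm (lat (J (Suc n) \<omega>) - lat (J n \<omega>)) \<and> jtime S (Suc n) \<omega> \<le> T}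
      \<le> p * (Q * T + 1) * exp 1"
proof -
  define \<delta> where "\<delta> = 1 / Q"
  have "0 < \<delta>"
    unfolding \<delta>_def using Q by simp
  define K where "K = nat \<lfloor>T / \<delta>\<rfloor>"
  define E where "E n = {\<omega>\<in>space M. (\<forall>i<Suc n. 0 < S i \<omega>) \<and> R \<le> norm (lat (J (Suc n) \<omega>) - lat (J n \<omega>))
            \<and> card {i. i < Suc n \<and> \<delta> < S i \<omega>} \<le> K}" for n
  have "AE \<omega> in M. \<omega> \<in> {\<omega>\<in>space M. \<exists>n. R \<le> norm (lat (J (Suc n) \<omega>) - lat (J n \<omega>)) \<and> jtime S (Suc n) \<omega> \<le> T}
      \<longrightarrow> \<omega> \<in> (\<Union>n. E n)"
    using AE_holding_times_pos
  proof eventually_elim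
    case (elim \<omega>)
    then show ?case
      using card_long_holds_le[where S = S and \<omega> = \<omega>, OF elim \<open>0 < \<delta>\<close>] unfolding E_def K_def by blast
  qed
  then have "measure M {\<omega>\<in>space M. \<exists>n. R \<le> norm (lat (J (Suc n) \<omega>) - lat (J n \<omega>)) \<and> jtime S (Suc n) \<omega> \<le> T}
      \<le> measure M (\<Union>n. E n)"
    by (rule measure_mono_AE) (unfold E_def, measurable)
  also have "\<dots> \<le> p * ((real K + 1) * exp (Q * \<delta>))"
    using emeasure_big_jump_few_long_holds_le[OF less_imp_le[OF \<open>0 < \<delta>\<close>] Q(2) far, of K] \<open>0 \<le> p\<close>
    unfolding E_def[symmetric] by (simp add: emeasure_eq_measure ennreal_mult'[symmetric] ennreal_le_iff)
  also have "\<dots> \<le> p * (Q * T + 1) * exp 1"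
  proof -
    have "real K \<le> T / \<delta>"
      unfolding K_def using \<open>0 \<le> T\<close> \<open>0 < \<delta>\<close> by (simp add: of_nat_nat)
    also have "T / \<delta> = Q * T"
      unfolding \<delta>_def by simp
    finally have "real K \<le> Q * T" .
    then show ?thesis
      unfolding \<delta>_def using Q \<open>0 \<le> p\<close> by (simp add: mult.assoc mult_left_mono)
  qed
  finally show ?thesis .
qed

lemma prob_exit_outside_le_big_jump:
  assumes "0 < \<rho>" "0 < \<gamma>" "0 < r" "r < s" "0 \<le> \<alpha>"
  shows "measure M {\<omega> \<in> space M.
      (\<lambda>u. (t + u, pos_rho \<rho> \<alpha> J S u \<omega>))
        (first_exit (Qbox \<gamma> \<alpha> \<rho> t ((1 / \<rho>) *\<^sub>R lat z) r) (\<lambda>u. (t + u, pos_rho \<rho> \<alpha> J S u \<omega>)))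
      \<notin> Qbox \<gamma> \<alpha> \<rho> t ((1 / \<rho>) *\<^sub>R lat z) s}
    \<le> measure M {\<omega>\<in>space M. \<exists>n. \<rho> * (s - r) \<le> norm (lat (J (Suc n) \<omega>) - lat (J n \<omega>))
        \<and> jtime S (Suc n) \<omega> \<le> \<rho> powr \<alpha> * (\<gamma> * r powr \<alpha>)}"
proof (rule measure_mono_AE)
  show "AE \<omega> in M. \<omega> \<in> {\<omega> \<in> space M.
      (\<lambda>u. (t + u, pos_rho \<rho> \<alpha> J S u \<omega>))
        (first_exit (Qbox \<gamma> \<alpha> \<rho> t ((1 / \<rho>) *\<^sub>R lat z) r) (\<lambda>u. (t + u, pos_rho \<rho> \<alpha> J S u \<omega>)))
      \<notin> Qbox \<gamma> \<alpha> \<rho> t ((1 / \<rho>) *\<^sub>R lat z) s} \<longrightarrow>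
    \<omega> \<in> {\<omega>\<in>space M. \<exists>n. \<rho> * (s - r) \<le> norm (lat (J (Suc n) \<omega>) - lat (J n \<omega>))
        \<and> jtime S (Suc n) \<omega> \<le> \<rho> powr \<alpha> * (\<gamma> * r powr \<alpha>)}"
    using AE_holding_times_pos AE_start
  proof eventually_elim
    case (elim \<omega>)
    show ?case
      using exit_outside_big_jump[where S = S and J = J and \<omega> = \<omega>, OF elim assms] by blast
  qed
qed (unfold jtime_def, measurable)

end

section \<open>The exit estimate\<close>

lemma big_jump_bound_le:
  fixes \<alpha> \<gamma> Q \<kappa> \<rho> r s :: real
  assumes "0 < \<alpha>" "0 < \<gamma>" "0 < Q" "0 < \<kappa>" "0 < \<rho>" "0 < r" "2 * r < s"
    and "(1 / (\<gamma> * Q)) powr (1 / \<alpha>) \<le> \<rho> * r"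
  shows "Q * (\<rho> * (s - r)) powr (-\<alpha>) / \<kappa> * (Q * (\<rho> powr \<alpha> * (\<gamma> * r powr \<alpha>)) + 1) * exp 1
    \<le> 2 * exp 1 * 2 powr \<alpha> * Q\<^sup>2 * \<gamma> / \<kappa> * r powr \<alpha> / s powr \<alpha>"
proof -
  define T where "T = \<rho> powr \<alpha> * (\<gamma> * r powr \<alpha>)"
  have "0 < s"
    using assms by simp
  have "1 / (\<gamma> * Q) \<le> (\<rho> * r) powr \<alpha>"
    using powr_mono2[OF less_imp_le[OF \<open>0 < \<alpha>\<close>] _ assms(8)] assms(1-3)
    by (simp add: powr_powr)
  then have "1 \<le> Q * T"
    unfolding T_def using assms by (simp add: powr_mult field_simps)
  have "(\<rho> * (s - r)) powr (-\<alpha>) \<le> (\<rho> * s / 2) powr (-\<alpha>)"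
    using assms by (intro powr_mono2') (auto simp: field_simps)
  also have "\<dots> = 2 powr \<alpha> * \<rho> powr (-\<alpha>) * s powr (-\<alpha>)"
    using assms \<open>0 < s\<close> by (simp add: powr_divide powr_mult powr_minus field_simps)
  finally have "(\<rho> * (s - r)) powr (-\<alpha>) * (Q * T + 1) \<le> (2 powr \<alpha> * \<rho> powr (-\<alpha>) * s powr (-\<alpha>)) * (2 * Q * T)"
    using \<open>1 \<le> Q * T\<close> by (intro mult_mono) auto
  then have "Q * (\<rho> * (s - r)) powr (-\<alpha>) / \<kappa> * (Q * T + 1) * exp 1
      \<le> Q * (2 powr \<alpha> * \<rho> powr (-\<alpha>) * s powr (-\<alpha>)) / \<kappa> * (2 * Q * T) * exp 1"
    using assms by (simp add: mult.assoc mult_left_mono divide_right_mono)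
  also have "\<dots> = 2 * exp 1 * 2 powr \<alpha> * Q\<^sup>2 * \<gamma> / \<kappa> * r powr \<alpha> / s powr \<alpha>"
  proof -
    have "\<rho> powr (-\<alpha>) * \<rho> powr \<alpha> = 1"
      using assms by (simp add: powr_add[symmetric])
    then show ?thesis
      unfolding T_def using assms \<open>0 < s\<close> by (simp add: powr_minus field_simps power2_eq_square)
  qed
  finally show ?thesis
    unfolding T_def .
qed

lemma prob_exit_outside_cylinder_le:
  fixes C :: "int^'d \<Rightarrow> int^'d \<Rightarrow> real" and M :: "'w measure" and \<alpha> \<kappa>1 \<rho> r s t :: real
  defines "Q \<equiv> \<kappa>1 * lattice_tail_const CARD('d) \<alpha>"
  assumes A: "condA1 C" "condA2 \<alpha> \<kappa>1 C" "condA3 \<alpha> N0 \<kappa>2 C"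
    and "0 < \<alpha>" "0 < \<kappa>1" "0 < \<kappa>2" "0 < \<gamma>"
    and "is_ctmc M C z J S" and \<rho>: "1 \<le> \<rho>" and "2 * r < s"
    and \<Theta>: "2 * max 1 ((1 / (\<gamma> * Q)) powr (1 / \<alpha>)) / \<rho> < 2 * r"
  shows "measure M {\<omega> \<in> space M.
        (\<lambda>u. (t + u, pos_rho \<rho> \<alpha> J S u \<omega>))
          (first_exit (Qbox \<gamma> \<alpha> \<rho> t ((1 / \<rho>) *\<^sub>R lat z) r) (\<lambda>u. (t + u, pos_rho \<rho> \<alpha> J S u \<omega>)))
        \<notin> Qbox \<gamma> \<alpha> \<rho> t ((1 / \<rho>) *\<^sub>R lat z) s}
      \<le> 2 * exp 1 * 2 powr \<alpha> * Q\<^sup>2 * \<gamma> / \<kappa>2 * r powr \<alpha> / s powr \<alpha>"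
proof -
  note A' = A \<open>0 < \<alpha>\<close> less_imp_le[OF \<open>0 < \<kappa>1\<close>] \<open>0 < \<kappa>2\<close>
  interpret ctmc M C z J S
    using \<open>is_ctmc M C z J S\<close> A(1) jump_prob_sum_one[OF A'] by unfold_locales
  have "0 < Q"
    unfolding Q_def using lattice_tail_const_pos[OF \<open>0 < \<alpha>\<close>] \<open>0 < \<kappa>1\<close> by simp
  have "max 1 ((1 / (\<gamma> * Q)) powr (1 / \<alpha>)) < \<rho> * r"
    using \<Theta> \<rho> by (simp add: field_simps)
  then have "(1 / (\<gamma> * Q)) powr (1 / \<alpha>) \<le> \<rho> * r" "0 < \<rho> * r"
    by auto
  then have "0 < r"
    using \<rho> by (simp add: zero_less_mult_iff)
  have "measure M {\<omega> \<in> space M.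
      (\<lambda>u. (t + u, pos_rho \<rho> \<alpha> J S u \<omega>))
        (first_exit (Qbox \<gamma> \<alpha> \<rho> t ((1 / \<rho>) *\<^sub>R lat z) r) (\<lambda>u. (t + u, pos_rho \<rho> \<alpha> J S u \<omega>)))
      \<notin> Qbox \<gamma> \<alpha> \<rho> t ((1 / \<rho>) *\<^sub>R lat z) s}
    \<le> measure M {\<omega>\<in>space M. \<exists>n. \<rho> * (s - r) \<le> norm (lat (J (Suc n) \<omega>) - lat (J n \<omega>))
        \<and> jtime S (Suc n) \<omega> \<le> \<rho> powr \<alpha> * (\<gamma> * r powr \<alpha>)}"
    using \<rho> \<open>0 < r\<close> \<open>2 * r < s\<close> assms by (intro prob_exit_outside_le_big_jump) auto
  also have "\<dots> \<le> Q * (\<rho> * (s - r)) powr (-\<alpha>) / \<kappa>2 * (Q * (\<rho> powr \<alpha> * (\<gamma> * r powr \<alpha>)) + 1) * exp 1"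
    using \<open>0 < Q\<close> \<open>0 < r\<close> \<rho> \<open>2 * r < s\<close> assms rate_le[OF A'(1,2,4,5)]
      nn_integral_far_jump_prob_le[OF A', of "\<rho> * (s - r)"]
    by (intro prob_big_jump_before_le) (auto simp: Q_def)
  also have "\<dots> \<le> 2 * exp 1 * 2 powr \<alpha> * Q\<^sup>2 * \<gamma> / \<kappa>2 * r powr \<alpha> / s powr \<alpha>"
    using \<open>0 < Q\<close> \<open>0 < r\<close> \<rho> \<open>2 * r < s\<close> assms \<open>_ \<le> \<rho> * r\<close>
    by (intro big_jump_bound_le) auto
  finally show ?thesis .
qed

theorem lemma4p4:
  fixes \<alpha> \<kappa>1 \<kappa>2 \<gamma> :: real and N0 :: nat
  assumes "0 < \<alpha>" "\<alpha> < 2" "0 < \<kappa>1" "0 < \<kappa>2" "0 < \<gamma>"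
  shows "\<exists>\<Theta>1 c. 1 \<le> \<Theta>1 \<and> 0 < c \<and>
    (\<forall>C :: int^'d \<Rightarrow> int^'d \<Rightarrow> real.
       condA1 C \<and> condA2 \<alpha> \<kappa>1 C \<and> condA3 \<alpha> N0 \<kappa>2 C \<and>
       (\<forall>(x0 :: int^'d) r (M' :: 'w measure) J' S'. 1 \<le> r \<longrightarrow> is_ctmc M' C x0 J' S' \<longrightarrow>
          measure M' {\<omega> \<in> space M'.
             first_exit (lball 1 (lat x0) r) (\<lambda>u. pos_rho 1 \<alpha> J' S' u \<omega>) < \<gamma> * r powr \<alpha>} \<le> 1 / 2)
       \<longrightarrow>
       (\<forall>\<rho> r s t (z :: int^'d) (M :: 'w measure) J S.
          1 \<le> \<rho> \<and> 2 * r < s \<and> \<Theta>1 / \<rho> < 2 * r \<and> 0 \<le> t \<and> is_ctmc M C z J S \<longrightarrow>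
          (let x = (1 / \<rho>) *\<^sub>R lat z;
               W = (\<lambda>\<omega> u. (t + u, pos_rho \<rho> \<alpha> J S u \<omega>))
           in measure M {\<omega> \<in> space M.
                 W \<omega> (first_exit (Qbox \<gamma> \<alpha> \<rho> t x r) (W \<omega>)) \<notin> Qbox \<gamma> \<alpha> \<rho> t x s}
              \<le> c * r powr \<alpha> / s powr \<alpha>)))"
proof -
  define Q where "Q = \<kappa>1 * lattice_tail_const CARD('d) \<alpha>"
  define \<Theta> where "\<Theta> = 2 * max 1 ((1 / (\<gamma> * Q)) powr (1 / \<alpha>))"
  define c where "c = 2 * exp 1 * 2 powr \<alpha> * Q\<^sup>2 * \<gamma> / \<kappa>2"
  have "0 < Q"
    unfolding Q_def using lattice_tail_const_pos[OF \<open>0 < \<alpha>\<close>] \<open>0 < \<kappa>1\<close> by simp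
  show ?thesis
  proof (rule exI[of _ \<Theta>], rule exI[of _ c], intro conjI allI impI)
    show "1 \<le> \<Theta>" "0 < c"
      unfolding \<Theta>_def c_def using \<open>0 < Q\<close> assms by auto
  qed (unfold Let_def c_def, elim conjE,
      rule prob_exit_outside_cylinder_le[where 'd = 'd, OF _ _ _ assms(1,3,4,5), folded Q_def, folded \<Theta>_def];
      assumption)
qed

end
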